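(* Let $N$ be a positive even integer and $M_t,M_r$ positive integers, $K_{\min}=\min(M_t,M_r)$, $K_{\max}=\max(M_t,M_r)$, and let $P_0>0$, $\sigma^2>0$, $\alpha\in\mathbb C\setminus\{0\}$, $L>0$, $\theta\in\mathbb R$. Let $\hat{\mathbf G}_t$, $\hat{\mathbf G}_r$ be the random matrices described in the context, and define the average optimal sensing SNRs $\overline{S}_1=\mathbb E\left[\max_{\mathbf\Phi}\frac{P_0|\alpha|^2L^2\|\hat{\mathbf G}_t^T\mathbf\Phi^T\mathbf a(\theta)\|^2\|\hat{\mathbf G}_r\mathbf\Phi^T\mathbf a(\theta)\|^2}{\sigma^2}\right]$ (fully-passive IRS) and $\overline{S}_2=\mathbb E\left[\max_{\mathbf\Phi}\frac{P_0|\alpha|^2LM_r\|\hat{\mathbf G}_t^T\mathbf\Phi^T\mathbf a(\theta)\|^2}{\sigma^2}\right]$ (semi-passive IRS), with maxima over all $\mathbf\Phi=\mathrm{diag}(e^{j\phi_1},\dots,e^{j\phi_N})$, $\phi_n\in\mathbb R$. If $N>\frac{2}{\pi}\sqrt{(M_t+M_r)^2+4\left(\frac{M_tM_r}{L}-K_{\min}K_{\max}\right)}-\frac{2(M_t+M_r)}{\pi}+1,$ then $\overline S_1>\overline S_2$.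
   Context: $j=\sqrt{-1}$. Fix $\hat d>0$, $\lambda>0$; $\mathbf a(\theta)\in\mathbb C^N$ has $n$-th entry $e^{j\pi(2n-N-1)\hat d\sin\theta/\lambda}$. Random channels: $\hat{\mathbf G}\in\mathbb C^{N\times K_{\min}}$, $\hat{\mathbf G}_t'\in\mathbb C^{N\times(M_t-K_{\min})}$, $\hat{\mathbf G}_r'\in\mathbb C^{(M_r-K_{\min})\times N}$ have all entries mutually independent circularly symmetric complex Gaussian with zero mean and unit variance; $\hat{\mathbf G}_t=[\hat{\mathbf G},\hat{\mathbf G}_t']$ and $\hat{\mathbf G}_r=\begin{bmatrix}\hat{\mathbf G}^T\\ \hat{\mathbf G}_r'\end{bmatrix}$. (These expressions are the sensing SNRs after optimal, maximum-ratio, transmit beamforming with power $P_0$, for BS-IRS channel $\sqrt L\hat{\mathbf G}_t$ and IRS-BS channel $\sqrt L\hat{\mathbf G}_r$.) *)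

theory Defs
  imports "HOL-Probability.Probability"
begin

text \<open>Circularly symmetric complex Gaussian, zero mean, unit variance:
  density (1/pi) exp(-|z|^2) w.r.t. Lebesgue measure on the complex plane.\<close>
definition cgauss :: "complex measure" where
  "cgauss = density lborel (\<lambda>z. ennreal (exp (- (cmod z)\<^sup>2) / pi))"

text \<open>Steering vector a(theta); index n = 0..N-1 corresponds to the paper's n+1.\<close>
definition steer :: "real \<Rightarrow> real \<Rightarrow> nat \<Rightarrow> real \<Rightarrow> nat \<Rightarrow> complex" where
  "steer d lam N \<theta> n =
     exp (\<i> * complex_of_real (pi * (2 * real (n + 1) - real N - 1) * d * sin \<theta> / lam))"

text \<open>Index set of all independent Gaussian entries:
  tag 0: entries (n,k) of G (N x Kmin); tag 1: entries (n,k) of G_t' (N x (Mt-Kmin));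
  tag 2: entries (m,n) of G_r' ((Mr-Kmin) x N).\<close>
definition chan_index :: "nat \<Rightarrow> nat \<Rightarrow> nat \<Rightarrow> (nat \<times> nat \<times> nat) set" where
  "chan_index N Mt Mr =
     ({0} \<times> {..<N} \<times> {..<min Mt Mr}) \<union>
     ({1} \<times> {..<N} \<times> {..<Mt - min Mt Mr}) \<union>
     ({2} \<times> {..<Mr - min Mt Mr} \<times> {..<N})"

definition chan_measure :: "nat \<Rightarrow> nat \<Rightarrow> nat \<Rightarrow> (nat \<times> nat \<times> nat \<Rightarrow> complex) measure" where
  "chan_measure N Mt Mr = PiM (chan_index N Mt Mr) (\<lambda>_. cgauss)"

text \<open>G_t = [G, G_t'] (N x Mt), entry (n,k).\<close>
definition Gt :: "nat \<Rightarrow> nat \<Rightarrow> (nat \<times> nat \<times> nat \<Rightarrow> complex) \<Rightarrow> nat \<Rightarrow> nat \<Rightarrow> complex" where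
  "Gt Mt Mr z n k = (if k < min Mt Mr then z (0, n, k) else z (1, n, k - min Mt Mr))"

text \<open>G_r = [G^T; G_r'] (Mr x N), entry (m,n).\<close>
definition Gr :: "nat \<Rightarrow> nat \<Rightarrow> (nat \<times> nat \<times> nat \<Rightarrow> complex) \<Rightarrow> nat \<Rightarrow> nat \<Rightarrow> complex" where
  "Gr Mt Mr z m n = (if m < min Mt Mr then z (0, n, m) else z (2, m - min Mt Mr, n))"

definition tx_gain :: "real \<Rightarrow> real \<Rightarrow> nat \<Rightarrow> nat \<Rightarrow> nat \<Rightarrow> real
    \<Rightarrow> (nat \<times> nat \<times> nat \<Rightarrow> complex) \<Rightarrow> (nat \<Rightarrow> real) \<Rightarrow> real" where
  "tx_gain d lam N Mt Mr \<theta> z \<phi> =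
     (\<Sum>k<Mt. (cmod (\<Sum>n<N. Gt Mt Mr z n k * exp (\<i> * complex_of_real (\<phi> n)) * steer d lam N \<theta> n))\<^sup>2)"

definition rx_gain :: "real \<Rightarrow> real \<Rightarrow> nat \<Rightarrow> nat \<Rightarrow> nat \<Rightarrow> real
    \<Rightarrow> (nat \<times> nat \<times> nat \<Rightarrow> complex) \<Rightarrow> (nat \<Rightarrow> real) \<Rightarrow> real" where
  "rx_gain d lam N Mt Mr \<theta> z \<phi> =
     (\<Sum>m<Mr. (cmod (\<Sum>n<N. Gr Mt Mr z m n * exp (\<i> * complex_of_real (\<phi> n)) * steer d lam N \<theta> n))\<^sup>2)"

definition avg_snr_fully_passive :: "real \<Rightarrow> real \<Rightarrow> nat \<Rightarrow> nat \<Rightarrow> nat \<Rightarrow> real \<Rightarrow> real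
    \<Rightarrow> complex \<Rightarrow> real \<Rightarrow> real \<Rightarrow> real" where
  "avg_snr_fully_passive d lam N Mt Mr P0 \<sigma>2 \<alpha> L \<theta> =
     (\<integral>z. (SUP \<phi>::nat \<Rightarrow> real. P0 * (cmod \<alpha>)\<^sup>2 * L\<^sup>2 * tx_gain d lam N Mt Mr \<theta> z \<phi>
              * rx_gain d lam N Mt Mr \<theta> z \<phi> / \<sigma>2) \<partial>chan_measure N Mt Mr)"

definition avg_snr_semi_passive :: "real \<Rightarrow> real \<Rightarrow> nat \<Rightarrow> nat \<Rightarrow> nat \<Rightarrow> real \<Rightarrow> real
    \<Rightarrow> complex \<Rightarrow> real \<Rightarrow> real \<Rightarrow> real" where
  "avg_snr_semi_passive d lam N Mt Mr P0 \<sigma>2 \<alpha> L \<theta> =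
     (\<integral>z. (SUP \<phi>::nat \<Rightarrow> real. P0 * (cmod \<alpha>)\<^sup>2 * L * real Mr
              * tx_gain d lam N Mt Mr \<theta> z \<phi> / \<sigma>2) \<partial>chan_measure N Mt Mr)"

end

theory Submission
  imports Defs
begin

text \<open>
  Write \<open>m\<close> for the mean modulus of a standard complex Gaussian and \<open>b = (N - 1) m\<^sup>2\<close>.
  For the semi-passive IRS, the triangle inequality bounds the transmit gain of every phase choice
  by \<open>\<Sum>\<^sub>k (\<Sum>\<^sub>n \<bar>G\<^sub>t(n,k)\<bar>)\<^sup>2\<close>, whose mean is \<open>M\<^sub>t N (1 + b)\<close>.
  For the fully-passive IRS it suffices to exhibit one phase choice: co-phasing the first column
  of \<open>G\<close>, which is shared by \<open>G\<^sub>t\<close> and \<open>G\<^sub>r\<close>, makes the first transmit and the first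
  receive beam coherent. Conditionally on that column, every other beam has unit-modulus
  weights and fresh Gaussian entries, so it has mean \<open>N\<close> and a product of two such beams has
  mean at least \<open>N\<^sup>2\<close> (by independence or by Jensen). This gives the lower bound
  \<open>N\<^sup>2 (M\<^sub>t + b) (M\<^sub>r + b)\<close> for the product of the two gains, and the condition on \<open>N\<close>,
  together with \<open>2 / pi \<le> m\<^sup>2 \<le> 1\<close>, makes the resulting bound on \<open>S\<^sub>1\<close> exceed that on \<open>S\<^sub>2\<close>.
\<close>

lemma (in prob_space) square_expectation_le:
  fixes X :: "'a \<Rightarrow> real"
  assumes "integrable M X" "integrable M (\<lambda>x. (X x)\<^sup>2)"
  shows "(expectation X)\<^sup>2 \<le> expectation (\<lambda>x. (X x)\<^sup>2)"
  using variance_positive[of X] variance_eq[OF assms] by simp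

lemma (in prob_space) expectation_shifted_product_ge:
  fixes X :: "'a \<Rightarrow> real"
  assumes "integrable M X" "integrable M (\<lambda>x. (X x)\<^sup>2)"
  shows "integrable M (\<lambda>x. (X x + p) * (X x + q))"
    and "(expectation X + p) * (expectation X + q) \<le> expectation (\<lambda>x. (X x + p) * (X x + q))"
proof -
  have expand: "(\<lambda>x. (X x + p) * (X x + q)) = (\<lambda>x. (X x)\<^sup>2 + (p + q) * X x + p * q)"
    by (auto simp: fun_eq_iff power2_eq_square algebra_simps)
  show "integrable M (\<lambda>x. (X x + p) * (X x + q))"
    unfolding expand using assms by simp
  have "(expectation X + p) * (expectation X + q) = (expectation X)\<^sup>2 + (p + q) * expectation X + p * q"
    by (simp add: power2_eq_square algebra_simps)
  also have "\<dots> \<le> expectation (\<lambda>x. (X x)\<^sup>2) + (p + q) * expectation X + p * q"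
    using square_expectation_le[OF assms] by simp
  also have "\<dots> = expectation (\<lambda>x. (X x + p) * (X x + q))"
    unfolding expand using assms by (simp add: prob_space)
  finally show "(expectation X + p) * (expectation X + q) \<le> expectation (\<lambda>x. (X x + p) * (X x + q))" .
qed

lemma integral_double_sum:
  fixes f :: "nat \<Rightarrow> nat \<Rightarrow> 'a \<Rightarrow> real"
  assumes "\<And>n n'. n < N \<Longrightarrow> n' < N \<Longrightarrow> integrable M (f n n') \<and> integral\<^sup>L M (f n n') = c n n'"
  shows "integrable M (\<lambda>y. \<Sum>n<N. \<Sum>n'<N. f n n' y) \<and>
    integral\<^sup>L M (\<lambda>y. \<Sum>n<N. \<Sum>n'<N. f n n' y) = (\<Sum>n<N. \<Sum>n'<N. c n n')"
proof -
  have inner: "integrable M (\<lambda>y. \<Sum>n'<N. f n n' y) \<and> integral\<^sup>L M (\<lambda>y. \<Sum>n'<N. f n n' y) = (\<Sum>n'<N. c n n')"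
    if "n < N" for n
    using assms that by (auto intro!: Bochner_Integration.integrable_sum simp: Bochner_Integration.integral_sum)
  then have "integrable M (\<lambda>y. \<Sum>n<N. \<Sum>n'<N. f n n' y)"
    by (auto intro: Bochner_Integration.integrable_sum)
  with inner show ?thesis
    by (simp add: Bochner_Integration.integral_sum)
qed

lemma borel_measurable_SUP_continuous:
  fixes G :: "'a \<Rightarrow> 'b::second_countable_topology \<Rightarrow> real"
  assumes meas: "\<And>\<phi>. (\<lambda>z. G z \<phi>) \<in> borel_measurable M"
    and cont: "\<And>z. z \<in> space M \<Longrightarrow> continuous_on UNIV (G z)"
    and bdd: "\<And>z. z \<in> space M \<Longrightarrow> bdd_above (range (G z))"
  shows "(\<lambda>z. SUP \<phi>. G z \<phi>) \<in> borel_measurable M"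
proof -
  obtain D :: "'b set" where D: "countable D" "\<And>X. open X \<Longrightarrow> X \<noteq> {} \<Longrightarrow> \<exists>d\<in>D. d \<in> X"
    using countable_dense_setE by blast
  have "D \<noteq> {}" using D(2)[of UNIV] by auto
  have bdd_D: "bdd_above (G z ` D)" if "z \<in> space M" for z
    using bdd[OF that] by (rule bdd_above_mono) auto
  text \<open>By continuity, the supremum over the countable dense set \<open>D\<close> is already the full one.\<close>
  have "(SUP \<phi>. G z \<phi>) = (SUP \<phi>\<in>D. G z \<phi>)" if z: "z \<in> space M" for z
  proof (rule antisym)
    show "(SUP \<phi>. G z \<phi>) \<le> (SUP \<phi>\<in>D. G z \<phi>)"
    proof (rule cSUP_least)
      fix \<phi>
      show "G z \<phi> \<le> (SUP \<phi>\<in>D. G z \<phi>)"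
      proof (rule ccontr)
        assume "\<not> G z \<phi> \<le> (SUP \<phi>\<in>D. G z \<phi>)"
        then have "\<phi> \<in> G z -` {(SUP \<phi>\<in>D. G z \<phi>)<..}" by simp
        moreover have "open (G z -` {(SUP \<phi>\<in>D. G z \<phi>)<..})"
          using cont[OF z] by (intro open_vimage) auto
        ultimately obtain d where "d \<in> D" "(SUP \<phi>\<in>D. G z \<phi>) < G z d"
          using D(2) by blast
        then show False
          using cSUP_upper[OF _ bdd_D[OF z]] by fastforce
      qed
    qed simp
    show "(SUP \<phi>\<in>D. G z \<phi>) \<le> (SUP \<phi>. G z \<phi>)"
      by (rule cSUP_subset_mono) (use \<open>D \<noteq> {}\<close> bdd[OF z] in auto)
  qed
  moreover have "(\<lambda>z. SUP \<phi>\<in>D. G z \<phi>) \<in> borel_measurable M"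
    by (rule borel_measurable_cSUP) (use D(1) meas bdd_D in auto)
  ultimately show ?thesis
    by (subst measurable_cong) auto
qed

lemma (in product_sigma_finite) product_integral_fold_ge:
  fixes f g :: "_ \<Rightarrow> real"
  assumes IJ: "I \<inter> J = {}" "finite I" "finite J"
    and f: "integrable (Pi\<^sub>M (I \<union> J) M) f" and g: "integrable (Pi\<^sub>M I M) g"
    and le: "\<And>x. x \<in> space (Pi\<^sub>M I M) \<Longrightarrow> g x \<le> (\<integral>y. f (merge I J (x, y)) \<partial>Pi\<^sub>M J M)"
  shows "integral\<^sup>L (Pi\<^sub>M I M) g \<le> integral\<^sup>L (Pi\<^sub>M (I \<union> J) M) f"
proof -
  interpret I: finite_product_sigma_finite M I by standard fact
  interpret J: finite_product_sigma_finite M J by standard fact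
  interpret P: pair_sigma_finite "Pi\<^sub>M I M" "Pi\<^sub>M J M" ..
  have "integrable (Pi\<^sub>M I M \<Otimes>\<^sub>M Pi\<^sub>M J M) (\<lambda>p. f (merge I J p))"
    by (rule integrable_distr[OF measurable_merge]) (simp add: distr_merge[OF IJ] f)
  then have "integrable (Pi\<^sub>M I M) (\<lambda>x. \<integral>y. f (merge I J (x, y)) \<partial>Pi\<^sub>M J M)"
    by (rule P.integrable_fst')
  then show ?thesis
    using integral_mono[OF g _ le] product_integral_fold[OF IJ f] by simp
qed

section \<open>The standard complex Gaussian\<close>

lemma complex_pair_measurable [measurable]:
  "case_prod Complex \<in> borel_measurable (lborel \<Otimes>\<^sub>M lborel)"
proof -
  have "continuous_on UNIV (\<lambda>p. complex_of_real (fst p) + \<i> * complex_of_real (snd p))"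
    by (intro continuous_intros)
  then have "(\<lambda>p. complex_of_real (fst p) + \<i> * complex_of_real (snd p)) \<in> borel_measurable borel"
    by (rule borel_measurable_continuous_onI)
  moreover have "case_prod Complex = (\<lambda>p. complex_of_real (fst p) + \<i> * complex_of_real (snd p))"
    by (auto simp: fun_eq_iff Complex_eq)
  ultimately show ?thesis by (simp add: lborel_prod)
qed

lemma distr_lborel_pair_Complex: "distr (lborel \<Otimes>\<^sub>M lborel) borel (case_prod Complex) = lborel"
proof (rule lborel_eqI[symmetric])
  fix l u :: complex assume lu: "\<And>b. b \<in> Basis \<Longrightarrow> l \<bullet> b \<le> u \<bullet> b"
  have box: "case_prod Complex -` box l u \<inter> space (lborel \<Otimes>\<^sub>M lborel) = {Re l<..<Re u} \<times> {Im l<..<Im u}"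
    by (auto simp: box_def Basis_complex_def space_pair_measure inner_complex_def)
  have "Re l \<le> Re u" "Im l \<le> Im u" using lu[of 1] lu[of \<i>]
    by (auto simp: Basis_complex_def inner_complex_def)
  then show "emeasure (distr (lborel \<Otimes>\<^sub>M lborel) borel (case_prod Complex)) (box l u) = (\<Prod>b\<in>Basis. (u - l) \<bullet> b)"
    by (simp add: emeasure_distr box lborel.emeasure_pair_measure_Times Basis_complex_def
        inner_complex_def ennreal_mult)
qed simp

definition normal_half_var :: "real measure" where
  "normal_half_var = density lborel (normal_density 0 (sqrt (1/2)))"

lemma normal_density_half_var: "normal_density 0 (sqrt (1/2)) x = exp (- x\<^sup>2) / sqrt pi"
  by (simp add: normal_density_def)

interpretation normal_half_var: prob_space normal_half_var
  unfolding normal_half_var_def by (rule prob_space_normal_density) simp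

lemma sets_normal_half_var [measurable_cong, simp]: "sets normal_half_var = sets borel"
  by (simp add: normal_half_var_def)

lemma cgauss_eq_distr_pair:
  "cgauss = distr (normal_half_var \<Otimes>\<^sub>M normal_half_var) borel (case_prod Complex)"
proof -
  let ?n = "normal_density 0 (sqrt (1/2))"
  have "sigma_finite_measure (density lborel (\<lambda>x. ennreal (?n x)))"
    using normal_half_var.sigma_finite_measure_axioms by (simp add: normal_half_var_def)
  then have pair: "normal_half_var \<Otimes>\<^sub>M normal_half_var
      = density (lborel \<Otimes>\<^sub>M lborel) (\<lambda>(x,y). ennreal (?n x) * ennreal (?n y))"
    unfolding normal_half_var_def
    by (intro pair_measure_density) (auto simp: lborel.sigma_finite_measure_axioms)
  have factor: "ennreal (exp (- (cmod (case_prod Complex p))\<^sup>2) / pi)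
      = (case p of (x,y) \<Rightarrow> ennreal (?n x) * ennreal (?n y))" for p
    by (cases p) (simp add: normal_density_half_var cmod_power2 exp_add[symmetric]
        ennreal_mult[symmetric] field_simps)
  have "cgauss = density (distr (lborel \<Otimes>\<^sub>M lborel) borel (case_prod Complex))
                   (\<lambda>z. ennreal (exp (- (cmod z)\<^sup>2) / pi))"
    unfolding cgauss_def distr_lborel_pair_Complex ..
  also have "\<dots> = distr (density (lborel \<Otimes>\<^sub>M lborel)
                     (\<lambda>p. ennreal (exp (- (cmod (case_prod Complex p))\<^sup>2) / pi))) borel (case_prod Complex)"
    by (rule density_distr) auto
  also have "\<dots> = distr (normal_half_var \<Otimes>\<^sub>M normal_half_var) borel (case_prod Complex)"
    unfolding pair factor ..
  finally show ?thesis .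
qed

lemma sets_cgauss [measurable_cong, simp]: "sets cgauss = sets borel"
  by (simp add: cgauss_def)

lemma space_cgauss [simp]: "space cgauss = UNIV"
  by (simp add: cgauss_def)

interpretation normal_half_var_pair: pair_prob_space normal_half_var normal_half_var ..

interpretation cgauss: prob_space cgauss
  unfolding cgauss_eq_distr_pair by (rule normal_half_var_pair.prob_space_distr) simp

lemma distr_cgauss_Re: "distr cgauss borel Re = normal_half_var"
proof -
  have "distr cgauss borel Re = distr (normal_half_var \<Otimes>\<^sub>M normal_half_var) borel (Re \<circ> case_prod Complex)"
    unfolding cgauss_eq_distr_pair by (subst distr_distr) auto
  also have "\<dots> = distr (normal_half_var \<Otimes>\<^sub>M normal_half_var) normal_half_var fst"
    by (rule distr_cong) auto
  finally show ?thesis by (simp add: normal_half_var.distr_pair_fst)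
qed

lemma distr_cgauss_Im: "distr cgauss borel Im = normal_half_var"
proof -
  let ?P = "normal_half_var \<Otimes>\<^sub>M normal_half_var"
  have "distr cgauss borel Im = distr (distr ?P ?P (\<lambda>(x, y). (y, x))) borel (Im \<circ> case_prod Complex)"
    unfolding cgauss_eq_distr_pair normal_half_var_pair.distr_pair_swap[symmetric]
    by (subst distr_distr) auto
  also have "\<dots> = distr ?P normal_half_var fst"
    by (subst distr_distr) (auto intro!: distr_cong)
  finally show ?thesis by (simp add: normal_half_var.distr_pair_fst)
qed

lemma normal_half_var_has_integral:
  fixes f :: "real \<Rightarrow> real"
  assumes "has_bochner_integral lborel (\<lambda>x. normal_density 0 (sqrt (1/2)) x * f x) c"
    and [measurable]: "f \<in> borel_measurable borel"
  shows "integrable normal_half_var f \<and> integral\<^sup>L normal_half_var f = c"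
proof -
  have "integrable lborel (\<lambda>x. normal_density 0 (sqrt (1/2)) x * f x)"
       "integral\<^sup>L lborel (\<lambda>x. normal_density 0 (sqrt (1/2)) x * f x) = c"
    using assms(1) by (auto simp: has_bochner_integral_iff)
  then show ?thesis
    unfolding normal_half_var_def by (simp add: integrable_density integral_density)
qed

lemma normal_half_var_moments:
  "integrable normal_half_var (\<lambda>x. x) \<and> integral\<^sup>L normal_half_var (\<lambda>x. x) = 0"
  "integrable normal_half_var (\<lambda>x. x\<^sup>2) \<and> integral\<^sup>L normal_half_var (\<lambda>x. x\<^sup>2) = 1/2"
  "integrable normal_half_var abs \<and> integral\<^sup>L normal_half_var abs = 1 / sqrt pi"
  "integrable normal_half_var (\<lambda>x. x^4)"
proof -
  show "integrable normal_half_var (\<lambda>x. x) \<and> integral\<^sup>L normal_half_var (\<lambda>x. x) = 0"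
    using normal_moment_odd[where k=0 and \<mu>=0 and \<sigma>="sqrt (1/2)"]
    by (intro normal_half_var_has_integral) auto
  show "integrable normal_half_var (\<lambda>x. x\<^sup>2) \<and> integral\<^sup>L normal_half_var (\<lambda>x. x\<^sup>2) = 1/2"
    using normal_moment_even[where k=1 and \<mu>=0 and \<sigma>="sqrt (1/2)"]
    by (intro normal_half_var_has_integral) auto
  have "sqrt (1/2) * sqrt (2 / pi) = 1 / sqrt pi"
    by (simp add: real_sqrt_mult[symmetric] real_sqrt_divide)
  then show "integrable normal_half_var abs \<and> integral\<^sup>L normal_half_var abs = 1 / sqrt pi"
    using normal_moment_abs_odd[where k=0 and \<mu>=0 and \<sigma>="sqrt (1/2)"]
    by (intro normal_half_var_has_integral) auto
  have "integrable lborel (\<lambda>x. normal_density 0 (sqrt (1/2)) x * (x - 0)^4)"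
    by (rule integrable_normal_moment) simp
  then show "integrable normal_half_var (\<lambda>x. x^4)"
    unfolding normal_half_var_def by (simp add: integrable_density)
qed

lemma cgauss_integral_Re:
  fixes h :: "real \<Rightarrow> real"
  assumes [measurable]: "h \<in> borel_measurable borel" and "integrable normal_half_var h"
  shows "integrable cgauss (\<lambda>z. h (Re z)) \<and> integral\<^sup>L cgauss (\<lambda>z. h (Re z)) = integral\<^sup>L normal_half_var h"
proof -
  have Re: "Re \<in> measurable cgauss borel" by measurable
  show ?thesis
    using integrable_distr_eq[OF Re assms(1)] integral_distr[OF Re assms(1)] assms(2)
    by (simp add: distr_cgauss_Re)
qed

lemma cgauss_integral_Im:
  fixes h :: "real \<Rightarrow> real"
  assumes [measurable]: "h \<in> borel_measurable borel" and "integrable normal_half_var h"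
  shows "integrable cgauss (\<lambda>z. h (Im z)) \<and> integral\<^sup>L cgauss (\<lambda>z. h (Im z)) = integral\<^sup>L normal_half_var h"
proof -
  have Im: "Im \<in> measurable cgauss borel" by measurable
  show ?thesis
    using integrable_distr_eq[OF Im assms(1)] integral_distr[OF Im assms(1)] assms(2)
    by (simp add: distr_cgauss_Im)
qed

lemma cgauss_mean: "integrable cgauss (\<lambda>z. z) \<and> integral\<^sup>L cgauss (\<lambda>z. z) = 0"
proof -
  have m: "(\<lambda>x::real. x) \<in> borel_measurable borel" by simp
  note re = cgauss_integral_Re[OF m conjunct1[OF normal_half_var_moments(1)]]
   and im = cgauss_integral_Im[OF m conjunct1[OF normal_half_var_moments(1)]]
  have "(\<lambda>z. z) = (\<lambda>z. complex_of_real (Re z) + \<i> * complex_of_real (Im z))"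
    by (auto simp: complex_eq_iff)
  then show ?thesis
    using re im normal_half_var_moments(1) by simp
qed

lemma cgauss_second_moment:
  "integrable cgauss (\<lambda>z. (cmod z)\<^sup>2) \<and> integral\<^sup>L cgauss (\<lambda>z. (cmod z)\<^sup>2) = 1"
proof -
  have "integrable cgauss (\<lambda>z. (Re z)\<^sup>2)" "integral\<^sup>L cgauss (\<lambda>z. (Re z)\<^sup>2) = 1/2"
       "integrable cgauss (\<lambda>z. (Im z)\<^sup>2)" "integral\<^sup>L cgauss (\<lambda>z. (Im z)\<^sup>2) = 1/2"
    using cgauss_integral_Re[of "\<lambda>x. x\<^sup>2"] cgauss_integral_Im[of "\<lambda>x. x\<^sup>2"] normal_half_var_moments(2)
    by auto
  then show ?thesis by (simp add: cmod_power2)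
qed

lemma integrable_cgauss_norm_pow4: "integrable cgauss (\<lambda>z. (cmod z)^4)"
proof (rule Bochner_Integration.integrable_bound)
  have "integrable cgauss (\<lambda>z. (Re z)^4)" "integrable cgauss (\<lambda>z. (Im z)^4)"
    using cgauss_integral_Re[of "\<lambda>x. x^4"] cgauss_integral_Im[of "\<lambda>x. x^4"] normal_half_var_moments(4)
    by simp_all
  then show "integrable cgauss (\<lambda>z. 2 * ((Re z)^4 + (Im z)^4))"
    by (intro integrable_mult_right Bochner_Integration.integrable_add)
  have "norm ((cmod z)^4) \<le> norm (2 * ((Re z)^4 + (Im z)^4))" for z
  proof -
    have "(cmod z)^4 = ((cmod z)\<^sup>2)\<^sup>2"
      using power_mult[of "cmod z" 2 2] by simp
    also have "\<dots> = ((Re z)\<^sup>2 + (Im z)\<^sup>2)\<^sup>2"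
      by (simp add: cmod_power2)
    also have "\<dots> = 2 * ((Re z)^4 + (Im z)^4) - ((Re z)\<^sup>2 - (Im z)\<^sup>2)\<^sup>2"
      by (simp add: power2_eq_square algebra_simps eval_nat_numeral)
    finally have "(cmod z)^4 \<le> 2 * ((Re z)^4 + (Im z)^4)"
      using zero_le_power2[of "(Re z)\<^sup>2 - (Im z)\<^sup>2"] by linarith
    then show ?thesis
      by (simp only: real_norm_def abs_of_nonneg[OF zero_le_power[OF norm_ge_zero]])
  qed
  then show "AE z in cgauss. norm ((cmod z)^4) \<le> norm (2 * ((Re z)^4 + (Im z)^4))"
    by (rule AE_I2)
qed measurable

definition cgauss_mean_norm :: real where
  "cgauss_mean_norm = integral\<^sup>L cgauss cmod"

text \<open>In fact the mean norm is \<open>sqrt pi / 2\<close> (the mean of a Rayleigh distribution);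
  comparing \<open>cmod z\<close> with \<open>(\<bar>Re z\<bar> + \<bar>Im z\<bar>) / sqrt 2\<close> gives a lower bound
  that avoids polar coordinates.\<close>
lemma cgauss_mean_norm_bounds: "2 / pi \<le> cgauss_mean_norm\<^sup>2" "cgauss_mean_norm\<^sup>2 \<le> 1"
proof -
  have int_abs: "integrable cgauss (\<lambda>z. \<bar>Re z\<bar> + \<bar>Im z\<bar>)"
    and int_abs_eq: "integral\<^sup>L cgauss (\<lambda>z. \<bar>Re z\<bar> + \<bar>Im z\<bar>) = 2 / sqrt pi"
    using cgauss_integral_Re[of abs] cgauss_integral_Im[of abs] normal_half_var_moments(3) by auto
  have int_norm: "integrable cgauss cmod"
    by (rule Bochner_Integration.integrable_bound[OF int_abs]) (auto simp: cmod_le)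
  have "\<bar>Re z\<bar> + \<bar>Im z\<bar> \<le> sqrt 2 * cmod z" for z
  proof -
    have "(\<bar>Re z\<bar> + \<bar>Im z\<bar>)\<^sup>2 = 2 * ((Re z)\<^sup>2 + (Im z)\<^sup>2) - (\<bar>Re z\<bar> - \<bar>Im z\<bar>)\<^sup>2"
      by (simp add: power2_eq_square algebra_simps)
    also have "\<dots> = 2 * (cmod z)\<^sup>2 - (\<bar>Re z\<bar> - \<bar>Im z\<bar>)\<^sup>2"
      by (simp add: cmod_power2)
    finally have "(\<bar>Re z\<bar> + \<bar>Im z\<bar>)\<^sup>2 \<le> (sqrt 2 * cmod z)\<^sup>2"
      by (simp add: power_mult_distrib)
    then show ?thesis by (rule power2_le_imp_le) simp
  qed
  then have "integral\<^sup>L cgauss (\<lambda>z. \<bar>Re z\<bar> + \<bar>Im z\<bar>) \<le> integral\<^sup>L cgauss (\<lambda>z. sqrt 2 * cmod z)"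
    using int_abs int_norm by (intro integral_mono) auto
  then have "2 / sqrt pi \<le> sqrt 2 * cgauss_mean_norm"
    by (simp add: int_abs_eq cgauss_mean_norm_def)
  then have "(2 / sqrt pi)\<^sup>2 \<le> (sqrt 2 * cgauss_mean_norm)\<^sup>2"
    by (rule power_mono) simp
  then show "2 / pi \<le> cgauss_mean_norm\<^sup>2"
    by (simp add: power_mult_distrib power_divide)
  show "cgauss_mean_norm\<^sup>2 \<le> 1"
    using cgauss.square_expectation_le[OF int_norm] cgauss_second_moment
    by (simp add: cgauss_mean_norm_def)
qed

section \<open>Independent standard complex Gaussians\<close>

abbreviation iid_cgauss :: "'i set \<Rightarrow> ('i \<Rightarrow> complex) measure" where
  "iid_cgauss K \<equiv> PiM K (\<lambda>_. cgauss)"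

lemma prob_space_iid_cgauss: "prob_space (iid_cgauss K)"
  by (rule prob_space_PiM) (rule cgauss.prob_space_axioms)

lemma measurable_iid_cgauss_component [measurable]: "(\<lambda>y. y i) \<in> borel_measurable (iid_cgauss K)"
proof (cases "i \<in> K")
  case True
  then have "(\<lambda>y. y i) \<in> measurable (iid_cgauss K) cgauss"
    by (rule measurable_component_singleton)
  then show ?thesis
    by (simp add: measurable_cong_sets[OF refl sets_cgauss])
next
  case False
  then have "(\<lambda>y. y i) \<in> borel_measurable (iid_cgauss K) \<longleftrightarrow> (\<lambda>y. undefined :: complex) \<in> borel_measurable (iid_cgauss K)"
    by (intro measurable_cong) (auto simp: space_PiM PiE_def extensional_def)
  then show ?thesis by simp
qed

lemma iid_cgauss_component_integral:
  fixes h :: "complex \<Rightarrow> 'b::{banach, second_countable_topology}"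
  assumes "i \<in> K" and "h \<in> borel_measurable borel" and "integrable cgauss h"
  shows "integrable (iid_cgauss K) (\<lambda>y. h (y i)) \<and> integral\<^sup>L (iid_cgauss K) (\<lambda>y. h (y i)) = integral\<^sup>L cgauss h"
proof -
  have distr: "distr (iid_cgauss K) cgauss (\<lambda>y. y i) = cgauss"
    using assms(1) by (intro distr_PiM_component) (auto intro: cgauss.prob_space_axioms)
  have comp: "(\<lambda>y. y i) \<in> measurable (iid_cgauss K) cgauss"
    using assms(1) by (rule measurable_component_singleton)
  have h: "h \<in> borel_measurable cgauss"
    using assms(2) by (simp add: measurable_cong_sets[OF sets_cgauss refl])
  show ?thesis
    using integrable_distr_eq[OF comp h] integral_distr[OF comp h] assms(3) by (simp add: distr)
qed

lemma iid_cgauss_integral_mult_disjoint: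
  fixes F G :: "('i \<Rightarrow> complex) \<Rightarrow> 'b::{real_normed_field, banach, second_countable_topology}"
  assumes K: "finite K" "K \<noteq> {}" and AB: "A \<inter> B = {}" "A \<subseteq> K" "B \<subseteq> K"
    and F: "F \<in> borel_measurable (iid_cgauss A)" "\<And>y. F (restrict y A) = F y" "integrable (iid_cgauss K) F"
    and G: "G \<in> borel_measurable (iid_cgauss B)" "\<And>y. G (restrict y B) = G y" "integrable (iid_cgauss K) G"
  shows "integrable (iid_cgauss K) (\<lambda>y. F y * G y) \<and>
    integral\<^sup>L (iid_cgauss K) (\<lambda>y. F y * G y) = integral\<^sup>L (iid_cgauss K) F * integral\<^sup>L (iid_cgauss K) G"
proof -
  interpret P: prob_space "iid_cgauss K" by (rule prob_space_iid_cgauss)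
  have components: "\<And>i. i \<in> K \<Longrightarrow> P.random_variable cgauss (\<lambda>y. y i)"
    by (rule measurable_component_singleton)
  have "distr (iid_cgauss K) (iid_cgauss K) (\<lambda>y. \<lambda>i\<in>K. y i) = distr (iid_cgauss K) (iid_cgauss K) (\<lambda>y. y)"
    by (rule distr_cong) (auto simp: space_PiM)
  then have "distr (iid_cgauss K) (iid_cgauss K) (\<lambda>y. \<lambda>i\<in>K. y i) = iid_cgauss K"
    by simp
  moreover have "PiM K (\<lambda>i. distr (iid_cgauss K) cgauss (\<lambda>y. y i)) = iid_cgauss K"
    by (rule PiM_cong) (auto intro: distr_PiM_component[of K "\<lambda>_. cgauss", OF cgauss.prob_space_axioms])
  ultimately have "P.indep_vars (\<lambda>_. cgauss) (\<lambda>i y. y i) K"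
    by (subst P.indep_vars_iff_distr_eq_PiM'[OF K(2) components]) simp_all
  then have "P.indep_var (iid_cgauss A) (\<lambda>y. restrict (\<lambda>i. y i) A) (iid_cgauss B) (\<lambda>y. restrict (\<lambda>i. y i) B)"
    by (rule P.indep_var_restrict[OF _ AB])
  then have "P.indep_var borel (F \<circ> (\<lambda>y. restrict (\<lambda>i. y i) A)) borel (G \<circ> (\<lambda>y. restrict (\<lambda>i. y i) B))"
    by (rule P.indep_var_compose[OF _ F(1) G(1)])
  moreover have "F \<circ> (\<lambda>y. restrict (\<lambda>i. y i) A) = F" "G \<circ> (\<lambda>y. restrict (\<lambda>i. y i) B) = G"
    using F(2) G(2) by (auto simp: fun_eq_iff)
  ultimately have indep: "P.indep_var borel F borel G" by simp
  show ?thesis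
    using P.indep_var_lebesgue_integral[OF indep F(3) G(3)] P.indep_var_integrable[OF indep F(3) G(3)]
    by simp
qed

lemma iid_cgauss_integral_mult_components:
  fixes f g :: "complex \<Rightarrow> 'b::{real_normed_field, banach, second_countable_topology}"
  assumes "finite K" "i \<in> K" "j \<in> K" "i \<noteq> j"
    and [measurable]: "f \<in> borel_measurable borel" "g \<in> borel_measurable borel"
    and "integrable cgauss f" "integrable cgauss g"
  shows "integrable (iid_cgauss K) (\<lambda>y. f (y i) * g (y j)) \<and>
    integral\<^sup>L (iid_cgauss K) (\<lambda>y. f (y i) * g (y j)) = integral\<^sup>L cgauss f * integral\<^sup>L cgauss g"
  using iid_cgauss_integral_mult_disjoint[of K "{i}" "{j}" "\<lambda>y. f (y i)" "\<lambda>y. g (y j)"]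
    iid_cgauss_component_integral[of i K f] iid_cgauss_component_integral[of j K g] assms
  by auto

definition sq_norm_on :: "'i set \<Rightarrow> ('i \<Rightarrow> complex) \<Rightarrow> real" where
  "sq_norm_on K y = (\<Sum>i\<in>K. (cmod (y i))\<^sup>2)"

lemma sq_norm_on_nonneg: "0 \<le> sq_norm_on K y"
  by (simp add: sq_norm_on_def sum_nonneg)

lemma component_le_sq_norm_on: "finite K \<Longrightarrow> i \<in> K \<Longrightarrow> cmod (y i) \<le> sqrt (sq_norm_on K y)"
  unfolding sq_norm_on_def by (intro real_le_rsqrt member_le_sum) auto

lemma integrable_iid_cgauss_sq_norm_bound:
  fixes f :: "('i \<Rightarrow> complex) \<Rightarrow> real"
  assumes K: "finite K" and f: "f \<in> borel_measurable (iid_cgauss K)"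
    and bound: "\<And>y. \<bar>f y\<bar> \<le> C * (sq_norm_on K y)\<^sup>2"
  shows "integrable (iid_cgauss K) f"
proof (rule Bochner_Integration.integrable_bound[OF _ f])
  show "integrable (iid_cgauss K) (\<lambda>y. \<bar>C\<bar> * real (card K) * (\<Sum>i\<in>K. (cmod (y i))^4))"
    using iid_cgauss_component_integral[of _ K "\<lambda>z. (cmod z)^4"] integrable_cgauss_norm_pow4
    by (intro integrable_mult_right Bochner_Integration.integrable_sum) auto
  have "(sq_norm_on K y)\<^sup>2 \<le> real (card K) * (\<Sum>i\<in>K. (cmod (y i))^4)" for y
    using Cauchy_Schwarz_ineq_sum[of "\<lambda>i. (cmod (y i))\<^sup>2" "\<lambda>_. 1" K]
    by (simp add: sq_norm_on_def mult.commute flip: power_mult)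
  then have "\<bar>f y\<bar> \<le> \<bar>C\<bar> * (real (card K) * (\<Sum>i\<in>K. (cmod (y i))^4))" for y
    by (meson abs_ge_self bound mult_mono order_trans abs_ge_zero sq_norm_on_nonneg zero_le_power2)
  then show "AE y in iid_cgauss K. norm (f y) \<le> norm (\<bar>C\<bar> * real (card K) * (\<Sum>i\<in>K. (cmod (y i))^4))"
    by (intro AE_I2) (simp add: sum_nonneg mult.assoc)
qed

lemma integrable_iid_cgauss_square_bound:
  fixes f :: "('i \<Rightarrow> complex) \<Rightarrow> real"
  assumes K: "finite K" and [measurable]: "f \<in> borel_measurable (iid_cgauss K)"
    and bound: "\<And>y. 0 \<le> f y" "\<And>y. f y \<le> C * sq_norm_on K y"
  shows "integrable (iid_cgauss K) (\<lambda>y. (f y)\<^sup>2)"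
proof (rule integrable_iid_cgauss_sq_norm_bound[OF K _, where C = "C\<^sup>2"])
  show "\<bar>(f y)\<^sup>2\<bar> \<le> C\<^sup>2 * (sq_norm_on K y)\<^sup>2" for y
  proof -
    have "(f y)\<^sup>2 \<le> (C * sq_norm_on K y)\<^sup>2"
      by (rule power_mono[OF bound(2) bound(1)])
    then show ?thesis
      by (simp add: power_mult_distrib)
  qed
qed measurable

section \<open>Beamforming gains\<close>

definition beam_gain :: "nat \<Rightarrow> (nat \<Rightarrow> 'i) \<Rightarrow> (nat \<Rightarrow> complex) \<Rightarrow> ('i \<Rightarrow> complex) \<Rightarrow> real" where
  "beam_gain N \<beta> w y = (cmod (\<Sum>n<N. y (\<beta> n) * w n))\<^sup>2"

definition coherent_amplitude :: "nat \<Rightarrow> (nat \<Rightarrow> 'i) \<Rightarrow> ('i \<Rightarrow> complex) \<Rightarrow> real" where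
  "coherent_amplitude N \<beta> y = (\<Sum>n<N. cmod (y (\<beta> n)))"

lemma beam_gain_measurable [measurable]: "beam_gain N \<beta> w \<in> borel_measurable (iid_cgauss K)"
  unfolding beam_gain_def[abs_def] by measurable

lemma coherent_amplitude_measurable [measurable]:
  "coherent_amplitude N \<beta> \<in> borel_measurable (iid_cgauss K)"
  unfolding coherent_amplitude_def[abs_def] by measurable

lemma beam_gain_nonneg: "0 \<le> beam_gain N \<beta> w y"
  by (simp add: beam_gain_def)

lemma coherent_amplitude_nonneg: "0 \<le> coherent_amplitude N \<beta> y"
  by (simp add: coherent_amplitude_def sum_nonneg)

lemma beam_gain_cong:
  "(\<And>n. n < N \<Longrightarrow> w n = w' n) \<Longrightarrow> (\<And>n. n < N \<Longrightarrow> y (\<beta> n) = y' (\<beta>' n)) \<Longrightarrow>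
    beam_gain N \<beta> w y = beam_gain N \<beta>' w' y'"
  unfolding beam_gain_def by (intro arg_cong[where f="\<lambda>s. (cmod s)\<^sup>2"] sum.cong) auto

lemma beam_gain_restrict: "\<beta> ` {..<N} \<subseteq> A \<Longrightarrow> beam_gain N \<beta> w (restrict y A) = beam_gain N \<beta> w y"
  by (rule beam_gain_cong) auto

lemma beam_gain_le_coherent_amplitude:
  assumes "\<And>n. n < N \<Longrightarrow> cmod (w n) = 1"
  shows "beam_gain N \<beta> w y \<le> (coherent_amplitude N \<beta> y)\<^sup>2"
proof -
  have "cmod (\<Sum>n<N. y (\<beta> n) * w n) \<le> (\<Sum>n<N. cmod (y (\<beta> n) * w n))"
    by (rule norm_sum)
  also have "\<dots> = coherent_amplitude N \<beta> y"
    unfolding coherent_amplitude_def by (intro sum.cong) (auto simp: norm_mult assms)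
  finally show ?thesis
    unfolding beam_gain_def by (intro power_mono) auto
qed

lemma coherent_amplitude_sq_le:
  assumes "finite K" "\<beta> ` {..<N} \<subseteq> K"
  shows "(coherent_amplitude N \<beta> y)\<^sup>2 \<le> real N ^ 2 * sq_norm_on K y"
proof -
  have "coherent_amplitude N \<beta> y \<le> real (card {..<N}) * sqrt (sq_norm_on K y)"
    unfolding coherent_amplitude_def
    by (rule sum_bounded_above) (use assms in \<open>auto intro!: component_le_sq_norm_on\<close>)
  then have "(coherent_amplitude N \<beta> y)\<^sup>2 \<le> (real N * sqrt (sq_norm_on K y))\<^sup>2"
    by (intro power_mono) (auto simp: coherent_amplitude_nonneg)
  then show ?thesis
    by (simp add: power_mult_distrib sq_norm_on_nonneg)
qed

lemma beam_gain_le_sq_norm_on: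
  assumes "finite K" "\<beta> ` {..<N} \<subseteq> K" "\<And>n. n < N \<Longrightarrow> cmod (w n) = 1"
  shows "beam_gain N \<beta> w y \<le> real N ^ 2 * sq_norm_on K y"
  using beam_gain_le_coherent_amplitude[OF assms(3)] coherent_amplitude_sq_le[OF assms(1,2)]
  by (rule order_trans)

lemma integral_coherent_amplitude_sq:
  assumes K: "finite K" and \<beta>: "inj_on \<beta> {..<N}" "\<beta> ` {..<N} \<subseteq> K"
  shows "integrable (iid_cgauss K) (\<lambda>y. (coherent_amplitude N \<beta> y)\<^sup>2) \<and>
    integral\<^sup>L (iid_cgauss K) (\<lambda>y. (coherent_amplitude N \<beta> y)\<^sup>2) = real N * (1 + (real N - 1) * cgauss_mean_norm\<^sup>2)"
proof -
  have pair: "integrable (iid_cgauss K) (\<lambda>y. cmod (y (\<beta> n)) * cmod (y (\<beta> n'))) \<and>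
      integral\<^sup>L (iid_cgauss K) (\<lambda>y. cmod (y (\<beta> n)) * cmod (y (\<beta> n'))) =
      (if n = n' then 1 else cgauss_mean_norm\<^sup>2)"
    if "n < N" "n' < N" for n n'
  proof (cases "n = n'")
    case True
    then show ?thesis
      using that \<beta> iid_cgauss_component_integral[of "\<beta> n" K "\<lambda>z. (cmod z)\<^sup>2"] cgauss_second_moment
      by (auto simp: power2_eq_square)
  next
    case False
    with that \<beta> have "\<beta> n \<noteq> \<beta> n'" "\<beta> n \<in> K" "\<beta> n' \<in> K"
      by (auto dest: inj_onD)
    then show ?thesis
      using False K iid_cgauss_integral_mult_components[of K "\<beta> n" "\<beta> n'" cmod cmod]
        integrable_norm[OF conjunct1[OF cgauss_mean]]
      by (simp add: cgauss_mean_norm_def power2_eq_square)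
  qed
  have "(\<lambda>y. (coherent_amplitude N \<beta> y)\<^sup>2) = (\<lambda>y. \<Sum>n<N. \<Sum>n'<N. cmod (y (\<beta> n)) * cmod (y (\<beta> n')))"
    by (simp add: coherent_amplitude_def power2_eq_square sum_product)
  moreover have "(\<Sum>n<N. \<Sum>n'<N. if n = n' then 1 else cgauss_mean_norm\<^sup>2)
      = real N * (1 + (real N - 1) * cgauss_mean_norm\<^sup>2)"
  proof -
    have "(\<Sum>n<N. \<Sum>n'<N. if n = n' then 1 else cgauss_mean_norm\<^sup>2)
        = (\<Sum>n<N. \<Sum>n'<N. cgauss_mean_norm\<^sup>2 + (if n = n' then 1 - cgauss_mean_norm\<^sup>2 else 0))"
      by (intro sum.cong) auto
    then show ?thesis
      by (simp add: sum.distrib algebra_simps)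
  qed
  ultimately show ?thesis
    using integral_double_sum[OF pair] by simp
qed

lemma integrable_coherent_amplitude_sq_sq:
  assumes "finite K" "\<beta> ` {..<N} \<subseteq> K"
  shows "integrable (iid_cgauss K) (\<lambda>y. ((coherent_amplitude N \<beta> y)\<^sup>2)\<^sup>2)"
  by (rule integrable_iid_cgauss_square_bound[OF assms(1) _ _ coherent_amplitude_sq_le[OF assms]]) simp_all

lemma beam_gain_expand:
  "beam_gain N \<beta> w y = (\<Sum>n<N. \<Sum>n'<N. Re (y (\<beta> n) * w n * cnj (y (\<beta> n') * w n')))"
proof -
  have "beam_gain N \<beta> w y = Re ((\<Sum>n<N. y (\<beta> n) * w n) * cnj (\<Sum>n<N. y (\<beta> n) * w n))"
    unfolding beam_gain_def complex_norm_square[symmetric] by simp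
  also have "\<dots> = (\<Sum>n<N. \<Sum>n'<N. Re (y (\<beta> n) * w n * cnj (y (\<beta> n') * w n')))"
    by (simp add: cnj_sum sum_product Re_sum)
  finally show ?thesis .
qed

lemma cnj_measurable [measurable]: "cnj \<in> borel_measurable borel"
  by (intro borel_measurable_continuous_onI continuous_intros)

lemma integral_beam_gain:
  assumes K: "finite K" and \<beta>: "inj_on \<beta> {..<N}" "\<beta> ` {..<N} \<subseteq> K"
    and w: "\<And>n. n < N \<Longrightarrow> cmod (w n) = 1"
  shows "integrable (iid_cgauss K) (beam_gain N \<beta> w) \<and> integral\<^sup>L (iid_cgauss K) (beam_gain N \<beta> w) = real N"
proof -
  let ?F = "\<lambda>n n' y. y (\<beta> n) * w n * cnj (y (\<beta> n') * w n')"
  have pair: "integrable (iid_cgauss K) (\<lambda>y. Re (?F n n' y)) \<and>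
      integral\<^sup>L (iid_cgauss K) (\<lambda>y. Re (?F n n' y)) = (if n = n' then 1 else 0)"
    if n: "n < N" "n' < N" for n n'
  proof (cases "n = n'")
    case True
    have "Re (?F n n y) = (cmod (y (\<beta> n)))\<^sup>2" for y
    proof -
      have "?F n n y = complex_of_real ((cmod (y (\<beta> n) * w n))\<^sup>2)"
        by (simp only: complex_norm_square)
      then show ?thesis
        using w[OF n(1)] by (simp add: norm_mult)
    qed
    then show ?thesis
      using True n \<beta> iid_cgauss_component_integral[of "\<beta> n" K "\<lambda>z. (cmod z)\<^sup>2"] cgauss_second_moment
      by auto
  next
    case False
    with n \<beta> have idx: "\<beta> n \<noteq> \<beta> n'" "\<beta> n \<in> K" "\<beta> n' \<in> K"
      by (auto dest: inj_onD)
    have "integrable cgauss (\<lambda>z. z * w n) \<and> integral\<^sup>L cgauss (\<lambda>z. z * w n) = 0"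
         "integrable cgauss (\<lambda>z. cnj (z * w n')) \<and> integral\<^sup>L cgauss (\<lambda>z. cnj (z * w n')) = 0"
      using cgauss_mean by (simp_all add: integral_cnj)
    then have int: "integrable (iid_cgauss K) (?F n n')" and "integral\<^sup>L (iid_cgauss K) (?F n n') = 0"
      using iid_cgauss_integral_mult_components[OF K idx(2,3,1), of "\<lambda>z. z * w n" "\<lambda>z. cnj (z * w n')"]
      by simp_all
    then have "integral\<^sup>L (iid_cgauss K) (\<lambda>y. Re (?F n n' y)) = 0"
      by (simp only: integral_Re[OF int] zero_complex.sel)
    then show ?thesis
      using False integrable_Re[OF int] by (simp only: if_False simp_thms)
  qed
  show ?thesis
    using integral_double_sum[OF pair] by (simp add: beam_gain_expand[abs_def])
qed

lemma integral_beam_gain_mult_ge: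
  assumes K: "finite K" and \<beta>: "inj_on \<beta> {..<N}" "\<beta> ` {..<N} \<subseteq> K"
    and \<gamma>: "inj_on \<gamma> {..<N}" "\<gamma> ` {..<N} \<subseteq> K"
    and same_or_disjoint: "(\<forall>n<N. \<beta> n = \<gamma> n) \<or> \<beta> ` {..<N} \<inter> \<gamma> ` {..<N} = {}"
    and w: "\<And>n. n < N \<Longrightarrow> cmod (w n) = 1"
  shows "integrable (iid_cgauss K) (\<lambda>y. beam_gain N \<beta> w y * beam_gain N \<gamma> w y) \<and>
    real N * real N \<le> integral\<^sup>L (iid_cgauss K) (\<lambda>y. beam_gain N \<beta> w y * beam_gain N \<gamma> w y)"
proof (cases "\<forall>n<N. \<beta> n = \<gamma> n")
  case True
  then have \<gamma>_eq: "beam_gain N \<gamma> w = beam_gain N \<beta> w"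
    by (auto intro!: beam_gain_cong)
  interpret P: prob_space "iid_cgauss K" by (rule prob_space_iid_cgauss)
  have "integrable (iid_cgauss K) (\<lambda>y. (beam_gain N \<beta> w y)\<^sup>2)"
    by (rule integrable_iid_cgauss_square_bound[OF K _ beam_gain_nonneg beam_gain_le_sq_norm_on[OF K \<beta>(2) w]])
      measurable
  then show ?thesis
    using P.square_expectation_le[of "beam_gain N \<beta> w"] integral_beam_gain[OF K \<beta> w]
    by (simp add: \<gamma>_eq power2_eq_square)
next
  case False
  show ?thesis
  proof (cases "N = 0")
    case True
    then show ?thesis by (simp add: beam_gain_def)
  next
    case N: False
    then have "K \<noteq> {}" using \<beta>(2) by auto
    moreover have "\<beta> ` {..<N} \<inter> \<gamma> ` {..<N} = {}"
      using False same_or_disjoint by blast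
    ultimately show ?thesis
      using iid_cgauss_integral_mult_disjoint[OF K _ _ \<beta>(2) \<gamma>(2), of "beam_gain N \<beta> w" "beam_gain N \<gamma> w"]
        integral_beam_gain[OF K \<beta> w] integral_beam_gain[OF K \<gamma> w]
      by (simp add: beam_gain_restrict)
  qed
qed

lemma integral_sum_beam_gain_product_ge:
  fixes \<beta> \<gamma> :: "nat \<Rightarrow> nat \<Rightarrow> 'i"
  assumes K: "finite K" and A: "finite A" and B: "finite B"
    and \<beta>: "\<And>k. k \<in> A \<Longrightarrow> inj_on (\<beta> k) {..<N}" "\<And>k. k \<in> A \<Longrightarrow> \<beta> k ` {..<N} \<subseteq> K"
    and \<gamma>: "\<And>m. m \<in> B \<Longrightarrow> inj_on (\<gamma> m) {..<N}" "\<And>m. m \<in> B \<Longrightarrow> \<gamma> m ` {..<N} \<subseteq> K"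
    and same_or_disjoint: "\<And>k m. k \<in> A \<Longrightarrow> m \<in> B \<Longrightarrow>
      (\<forall>n<N. \<beta> k n = \<gamma> m n) \<or> \<beta> k ` {..<N} \<inter> \<gamma> m ` {..<N} = {}"
    and w: "\<And>n. n < N \<Longrightarrow> cmod (w n) = 1"
  defines "T \<equiv> \<lambda>y. \<Sum>k\<in>A. beam_gain N (\<beta> k) w y"
    and "R \<equiv> \<lambda>y. \<Sum>m\<in>B. beam_gain N (\<gamma> m) w y"
  shows "integrable (iid_cgauss K) (\<lambda>y. (c + T y) * (c + R y)) \<and>
    (c + real (card A) * real N) * (c + real (card B) * real N)
      \<le> integral\<^sup>L (iid_cgauss K) (\<lambda>y. (c + T y) * (c + R y))"
proof -
  interpret P: prob_space "iid_cgauss K" by (rule prob_space_iid_cgauss)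
  let ?P = "\<lambda>y. \<Sum>k\<in>A. \<Sum>m\<in>B. beam_gain N (\<beta> k) w y * beam_gain N (\<gamma> m) w y"
  have pairs: "integrable (iid_cgauss K) (\<lambda>y. beam_gain N (\<beta> k) w y * beam_gain N (\<gamma> m) w y) \<and>
      real N * real N \<le> integral\<^sup>L (iid_cgauss K) (\<lambda>y. beam_gain N (\<beta> k) w y * beam_gain N (\<gamma> m) w y)"
    if "k \<in> A" "m \<in> B" for k m
    using that by (intro integral_beam_gain_mult_ge K \<beta> \<gamma> same_or_disjoint w)
  have T: "integrable (iid_cgauss K) T" "integral\<^sup>L (iid_cgauss K) T = real (card A) * real N"
    using integral_beam_gain[OF K \<beta> w] by (auto simp: T_def Bochner_Integration.integral_sum)
  have R: "integrable (iid_cgauss K) R" "integral\<^sup>L (iid_cgauss K) R = real (card B) * real N"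
    using integral_beam_gain[OF K \<gamma> w] by (auto simp: R_def Bochner_Integration.integral_sum)
  have P_int: "integrable (iid_cgauss K) ?P"
    using pairs by (auto intro: Bochner_Integration.integrable_sum)
  have "real (card A) * real (card B) * (real N * real N) = (\<Sum>k\<in>A. \<Sum>m\<in>B. real N * real N)"
    by simp
  also have "\<dots> \<le> (\<Sum>k\<in>A. \<Sum>m\<in>B. integral\<^sup>L (iid_cgauss K) (\<lambda>y. beam_gain N (\<beta> k) w y * beam_gain N (\<gamma> m) w y))"
    using pairs by (intro sum_mono) auto
  also have "\<dots> = integral\<^sup>L (iid_cgauss K) ?P"
    using pairs by (simp add: Bochner_Integration.integral_sum Bochner_Integration.integrable_sum)
  finally have P_ge: "real (card A) * real (card B) * (real N * real N) \<le> integral\<^sup>L (iid_cgauss K) ?P" .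
  have expand: "(\<lambda>y. (c + T y) * (c + R y)) = (\<lambda>y. c * c + c * T y + c * R y + ?P y)"
    by (auto simp: fun_eq_iff T_def R_def sum_product algebra_simps)
  show ?thesis
    unfolding expand using T R P_int P_ge by (simp add: P.prob_space algebra_simps)
qed

definition tx_idx :: "nat \<Rightarrow> nat \<Rightarrow> nat \<Rightarrow> nat \<Rightarrow> nat \<times> nat \<times> nat" where
  "tx_idx Mt Mr k n = (if k < min Mt Mr then (0, n, k) else (1, n, k - min Mt Mr))"

definition rx_idx :: "nat \<Rightarrow> nat \<Rightarrow> nat \<Rightarrow> nat \<Rightarrow> nat \<times> nat \<times> nat" where
  "rx_idx Mt Mr m n = (if m < min Mt Mr then (0, n, m) else (2, m - min Mt Mr, n))"

lemma Gt_eq_tx_idx: "Gt Mt Mr z n k = z (tx_idx Mt Mr k n)"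
  by (simp add: Gt_def tx_idx_def)

lemma Gr_eq_rx_idx: "Gr Mt Mr z m n = z (rx_idx Mt Mr m n)"
  by (simp add: Gr_def rx_idx_def)

lemma finite_chan_index: "finite (chan_index N Mt Mr)"
  by (simp add: chan_index_def)

lemma tx_idx_subset: "k < Mt \<Longrightarrow> tx_idx Mt Mr k ` {..<N} \<subseteq> chan_index N Mt Mr"
  by (auto simp: tx_idx_def chan_index_def)

lemma rx_idx_subset: "m < Mr \<Longrightarrow> rx_idx Mt Mr m ` {..<N} \<subseteq> chan_index N Mt Mr"
  by (auto simp: rx_idx_def chan_index_def)

lemma inj_on_tx_idx: "inj_on (tx_idx Mt Mr k) A"
  by (auto simp: tx_idx_def inj_on_def split: if_splits)

lemma inj_on_rx_idx: "inj_on (rx_idx Mt Mr m) A"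
  by (auto simp: rx_idx_def inj_on_def split: if_splits)

lemma tx_idx_zero: "0 < Mt \<Longrightarrow> 0 < Mr \<Longrightarrow> tx_idx Mt Mr 0 n = (0, n, 0)"
  by (simp add: tx_idx_def)

lemma rx_idx_zero: "0 < Mt \<Longrightarrow> 0 < Mr \<Longrightarrow> rx_idx Mt Mr 0 = tx_idx Mt Mr 0"
  by (simp add: fun_eq_iff tx_idx_def rx_idx_def)

lemma tx_rx_idx_same_or_disjoint:
  "(\<forall>n<N. tx_idx Mt Mr k n = rx_idx Mt Mr m n) \<or> tx_idx Mt Mr k ` {..<N} \<inter> rx_idx Mt Mr m ` {..<N} = {}"
  by (auto simp: tx_idx_def rx_idx_def split: if_splits)

definition irs_weight :: "real \<Rightarrow> real \<Rightarrow> nat \<Rightarrow> real \<Rightarrow> (nat \<Rightarrow> real) \<Rightarrow> nat \<Rightarrow> complex" where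
  "irs_weight d lam N \<theta> \<phi> n = exp (\<i> * complex_of_real (\<phi> n)) * steer d lam N \<theta> n"

lemma norm_steer: "cmod (steer d lam N \<theta> n) = 1"
  unfolding steer_def by (rule norm_exp_i_times)

lemma norm_irs_weight: "cmod (irs_weight d lam N \<theta> \<phi> n) = 1"
  by (simp add: irs_weight_def norm_mult norm_steer norm_exp_i_times)

lemma tx_gain_eq_sum_beam_gain:
  "tx_gain d lam N Mt Mr \<theta> z \<phi> = (\<Sum>k<Mt. beam_gain N (tx_idx Mt Mr k) (irs_weight d lam N \<theta> \<phi>) z)"
  by (simp add: tx_gain_def beam_gain_def irs_weight_def Gt_eq_tx_idx mult.assoc)

lemma rx_gain_eq_sum_beam_gain:
  "rx_gain d lam N Mt Mr \<theta> z \<phi> = (\<Sum>m<Mr. beam_gain N (rx_idx Mt Mr m) (irs_weight d lam N \<theta> \<phi>) z)"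
  by (simp add: rx_gain_def beam_gain_def irs_weight_def Gr_eq_rx_idx mult.assoc)

lemma sum_beam_gain_le_sq_norm_on:
  assumes "finite K" "\<And>k. k < M \<Longrightarrow> \<beta> k ` {..<N} \<subseteq> K" "\<And>n. n < N \<Longrightarrow> cmod (w n) = 1"
  shows "(\<Sum>k<M. beam_gain N (\<beta> k) w y) \<le> real M * (real N ^ 2 * sq_norm_on K y)"
  using sum_mono[of "{..<M}" "\<lambda>k. beam_gain N (\<beta> k) w y" "\<lambda>_. real N ^ 2 * sq_norm_on K y"]
    beam_gain_le_sq_norm_on[OF assms(1,2,3)]
  by simp

lemma tx_gain_nonneg: "0 \<le> tx_gain d lam N Mt Mr \<theta> z \<phi>"
  by (simp add: tx_gain_def sum_nonneg)

lemma rx_gain_nonneg: "0 \<le> rx_gain d lam N Mt Mr \<theta> z \<phi>"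
  by (simp add: rx_gain_def sum_nonneg)

lemma tx_rx_gain_product_le:
  "tx_gain d lam N Mt Mr \<theta> z \<phi> * rx_gain d lam N Mt Mr \<theta> z \<phi>
    \<le> real Mt * real Mr * real N ^ 4 * (sq_norm_on (chan_index N Mt Mr) z)\<^sup>2"
proof -
  have "tx_gain d lam N Mt Mr \<theta> z \<phi> \<le> real Mt * (real N ^ 2 * sq_norm_on (chan_index N Mt Mr) z)"
    unfolding tx_gain_eq_sum_beam_gain
    by (rule sum_beam_gain_le_sq_norm_on[OF finite_chan_index tx_idx_subset norm_irs_weight])
  moreover have "rx_gain d lam N Mt Mr \<theta> z \<phi> \<le> real Mr * (real N ^ 2 * sq_norm_on (chan_index N Mt Mr) z)"
    unfolding rx_gain_eq_sum_beam_gain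
    by (rule sum_beam_gain_le_sq_norm_on[OF finite_chan_index rx_idx_subset norm_irs_weight])
  ultimately have "tx_gain d lam N Mt Mr \<theta> z \<phi> * rx_gain d lam N Mt Mr \<theta> z \<phi>
      \<le> (real Mt * (real N ^ 2 * sq_norm_on (chan_index N Mt Mr) z))
        * (real Mr * (real N ^ 2 * sq_norm_on (chan_index N Mt Mr) z))"
    by (rule mult_mono) (auto simp: tx_gain_nonneg rx_gain_nonneg sq_norm_on_nonneg)
  then show ?thesis
    by (simp add: power2_eq_square eval_nat_numeral algebra_simps)
qed

lemma continuous_on_tx_gain: "continuous_on UNIV (tx_gain d lam N Mt Mr \<theta> z)"
  unfolding tx_gain_def[abs_def] by (intro continuous_intros continuous_on_product_coordinates)

lemma continuous_on_rx_gain: "continuous_on UNIV (rx_gain d lam N Mt Mr \<theta> z)"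
  unfolding rx_gain_def[abs_def] by (intro continuous_intros continuous_on_product_coordinates)

lemma tx_gain_measurable [measurable]: "(\<lambda>z. tx_gain d lam N Mt Mr \<theta> z \<phi>) \<in> borel_measurable (iid_cgauss K)"
  unfolding tx_gain_def Gt_def by measurable

lemma rx_gain_measurable [measurable]: "(\<lambda>z. rx_gain d lam N Mt Mr \<theta> z \<phi>) \<in> borel_measurable (iid_cgauss K)"
  unfolding rx_gain_def Gr_def by measurable

section \<open>Co-phasing the shared column\<close>

definition align_phasor :: "complex \<Rightarrow> complex" where
  "align_phasor c = (if c = 0 then 1 else cnj c / complex_of_real (cmod c))"

lemma norm_align_phasor: "cmod (align_phasor c) = 1"
  by (auto simp: align_phasor_def norm_divide)

lemma mult_align_phasor: "c * align_phasor c = complex_of_real (cmod c)"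
proof (cases "c = 0")
  case False
  have "c * cnj c = complex_of_real ((cmod c)\<^sup>2)"
    by (rule complex_norm_square[symmetric])
  then have "c * align_phasor c = complex_of_real ((cmod c)\<^sup>2) / complex_of_real (cmod c)"
    using False by (simp add: align_phasor_def)
  also have "\<dots> = complex_of_real (cmod c)"
    using False by (simp add: power2_eq_square)
  finally show ?thesis .
qed (simp add: align_phasor_def)

definition aligned_weight :: "(nat \<times> nat \<times> nat \<Rightarrow> complex) \<Rightarrow> nat \<Rightarrow> complex" where
  "aligned_weight z n = align_phasor (z (0, n, 0))"

text \<open>The IRS phases that co-phase the reflections along the first column of \<open>G\<close>, which is both
  the first column of \<open>G_t\<close> and the first row of \<open>G_r\<close>.\<close>
definition aligned_phases :: "real \<Rightarrow> real \<Rightarrow> nat \<Rightarrow> real \<Rightarrow> (nat \<times> nat \<times> nat \<Rightarrow> complex) \<Rightarrow> nat \<Rightarrow> real" where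
  "aligned_phases d lam N \<theta> z n = Arg (aligned_weight z n * cnj (steer d lam N \<theta> n))"

lemma irs_weight_aligned_phases:
  "irs_weight d lam N \<theta> (aligned_phases d lam N \<theta> z) = aligned_weight z"
proof
  fix n
  let ?s = "steer d lam N \<theta> n" and ?a = "aligned_weight z n * cnj (steer d lam N \<theta> n)"
  have "cmod ?a = 1"
    by (simp add: norm_mult aligned_weight_def norm_align_phasor norm_steer)
  then have "exp (\<i> * complex_of_real (Arg ?a)) = ?a"
    by (simp add: complex_norm_eq_1_exp_eq)
  moreover have "cnj ?s * ?s = 1"
    using complex_norm_square[of ?s] by (simp add: norm_steer mult.commute)
  ultimately show "irs_weight d lam N \<theta> (aligned_phases d lam N \<theta> z) n = aligned_weight z n"
    by (simp add: irs_weight_def aligned_phases_def mult.assoc)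
qed

lemma norm_aligned_weight: "cmod (aligned_weight z n) = 1"
  by (simp add: aligned_weight_def norm_align_phasor)

lemma beam_gain_first_aligned:
  assumes "0 < Mt" "0 < Mr"
  shows "beam_gain N (tx_idx Mt Mr 0) (aligned_weight z) z = (coherent_amplitude N (tx_idx Mt Mr 0) z)\<^sup>2"
proof -
  have "(\<Sum>n<N. z (tx_idx Mt Mr 0 n) * aligned_weight z n) = complex_of_real (coherent_amplitude N (tx_idx Mt Mr 0) z)"
    by (simp add: coherent_amplitude_def tx_idx_zero[OF assms] aligned_weight_def mult_align_phasor)
  then show ?thesis
    by (simp add: beam_gain_def coherent_amplitude_nonneg)
qed

lemma tx_gain_aligned_phases:
  assumes "0 < Mt" "0 < Mr"
  shows "tx_gain d lam N Mt Mr \<theta> z (aligned_phases d lam N \<theta> z) =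
    (coherent_amplitude N (tx_idx Mt Mr 0) z)\<^sup>2 + (\<Sum>k\<in>{1..<Mt}. beam_gain N (tx_idx Mt Mr k) (aligned_weight z) z)"
proof -
  have "{..<Mt} = insert 0 {1..<Mt}" using assms(1) by auto
  then show ?thesis
    by (simp add: tx_gain_eq_sum_beam_gain irs_weight_aligned_phases beam_gain_first_aligned[OF assms])
qed

lemma rx_gain_aligned_phases:
  assumes "0 < Mt" "0 < Mr"
  shows "rx_gain d lam N Mt Mr \<theta> z (aligned_phases d lam N \<theta> z) =
    (coherent_amplitude N (tx_idx Mt Mr 0) z)\<^sup>2 + (\<Sum>m\<in>{1..<Mr}. beam_gain N (rx_idx Mt Mr m) (aligned_weight z) z)"
proof -
  have "{..<Mr} = insert 0 {1..<Mr}" using assms(2) by auto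
  then show ?thesis
    by (simp add: rx_gain_eq_sum_beam_gain irs_weight_aligned_phases rx_idx_zero[OF assms]
        beam_gain_first_aligned[OF assms])
qed

lemma tx_idx_subset_diff_first:
  "k \<in> {1..<Mt} \<Longrightarrow> tx_idx Mt Mr k ` {..<N} \<subseteq> chan_index N Mt Mr - tx_idx Mt Mr 0 ` {..<N}"
  using tx_idx_subset[of k Mt Mr N] by (auto simp: tx_idx_def split: if_splits)

lemma rx_idx_subset_diff_first:
  "m \<in> {1..<Mr} \<Longrightarrow> rx_idx Mt Mr m ` {..<N} \<subseteq> chan_index N Mt Mr - tx_idx Mt Mr 0 ` {..<N}"
  using rx_idx_subset[of m Mr Mt N] by (auto simp: tx_idx_def rx_idx_def split: if_splits)

lemma aligned_gains_merge:
  fixes N Mt Mr :: nat and x y :: "nat \<times> nat \<times> nat \<Rightarrow> complex"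
  assumes pos: "0 < Mt" "0 < Mr"
  defines "J0 \<equiv> tx_idx Mt Mr 0 ` {..<N}"
    and "J \<equiv> chan_index N Mt Mr - tx_idx Mt Mr 0 ` {..<N}"
  assumes z_def: "z = merge J0 J (x, y)"
  shows "tx_gain d lam N Mt Mr \<theta> z (aligned_phases d lam N \<theta> z) =
      (coherent_amplitude N (tx_idx Mt Mr 0) x)\<^sup>2 + (\<Sum>k\<in>{1..<Mt}. beam_gain N (tx_idx Mt Mr k) (aligned_weight x) y)"
    and "rx_gain d lam N Mt Mr \<theta> z (aligned_phases d lam N \<theta> z) =
      (coherent_amplitude N (tx_idx Mt Mr 0) x)\<^sup>2 + (\<Sum>m\<in>{1..<Mr}. beam_gain N (rx_idx Mt Mr m) (aligned_weight x) y)"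
proof -
  have z_J0: "z (tx_idx Mt Mr 0 n) = x (tx_idx Mt Mr 0 n)" if "n < N" for n
    using that by (simp add: z_def J0_def merge_def)
  have z_J: "z i = y i" if "i \<in> J" for i
    using that by (auto simp: z_def J0_def J_def merge_def)
  have amplitude: "coherent_amplitude N (tx_idx Mt Mr 0) z = coherent_amplitude N (tx_idx Mt Mr 0) x"
    by (simp add: coherent_amplitude_def z_J0)
  have weight: "aligned_weight z n = aligned_weight x n" if "n < N" for n
    using z_J0[OF that] by (simp add: aligned_weight_def tx_idx_zero[OF pos])
  have "tx_idx Mt Mr k n \<in> J" if "k \<in> {1..<Mt}" "n < N" for k n
    using tx_idx_subset_diff_first[OF that(1)] that(2) by (auto simp: J_def)
  then have tx: "beam_gain N (tx_idx Mt Mr k) (aligned_weight z) z = beam_gain N (tx_idx Mt Mr k) (aligned_weight x) y"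
    if "k \<in> {1..<Mt}" for k
    using that by (intro beam_gain_cong) (auto simp: weight z_J)
  have "rx_idx Mt Mr m n \<in> J" if "m \<in> {1..<Mr}" "n < N" for m n
    using rx_idx_subset_diff_first[OF that(1)] that(2) by (auto simp: J_def)
  then have rx: "beam_gain N (rx_idx Mt Mr m) (aligned_weight z) z = beam_gain N (rx_idx Mt Mr m) (aligned_weight x) y"
    if "m \<in> {1..<Mr}" for m
    using that by (intro beam_gain_cong) (auto simp: weight z_J)
  show "tx_gain d lam N Mt Mr \<theta> z (aligned_phases d lam N \<theta> z) =
      (coherent_amplitude N (tx_idx Mt Mr 0) x)\<^sup>2 + (\<Sum>k\<in>{1..<Mt}. beam_gain N (tx_idx Mt Mr k) (aligned_weight x) y)"
    by (simp add: tx_gain_aligned_phases[OF pos] amplitude tx)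
  show "rx_gain d lam N Mt Mr \<theta> z (aligned_phases d lam N \<theta> z) =
      (coherent_amplitude N (tx_idx Mt Mr 0) x)\<^sup>2 + (\<Sum>m\<in>{1..<Mr}. beam_gain N (rx_idx Mt Mr m) (aligned_weight x) y)"
    by (simp add: rx_gain_aligned_phases[OF pos] amplitude rx)
qed

definition aligned_gain_product :: "real \<Rightarrow> real \<Rightarrow> nat \<Rightarrow> nat \<Rightarrow> nat \<Rightarrow> real
    \<Rightarrow> (nat \<times> nat \<times> nat \<Rightarrow> complex) \<Rightarrow> real" where
  "aligned_gain_product d lam N Mt Mr \<theta> z =
     tx_gain d lam N Mt Mr \<theta> z (aligned_phases d lam N \<theta> z) * rx_gain d lam N Mt Mr \<theta> z (aligned_phases d lam N \<theta> z)"

lemma integrable_aligned_gain_product: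
  assumes pos: "0 < Mt" "0 < Mr"
  shows "integrable (iid_cgauss (chan_index N Mt Mr)) (aligned_gain_product d lam N Mt Mr \<theta>)"
proof -
  have "aligned_gain_product d lam N Mt Mr \<theta> \<in> borel_measurable (iid_cgauss (chan_index N Mt Mr))"
    unfolding aligned_gain_product_def[abs_def] tx_gain_aligned_phases[OF pos] rx_gain_aligned_phases[OF pos]
    unfolding aligned_weight_def align_phasor_def beam_gain_def coherent_amplitude_def by measurable
  then show ?thesis
    by (rule integrable_iid_cgauss_sq_norm_bound[OF finite_chan_index, where C = "real Mt * real Mr * real N ^ 4"])
      (simp add: aligned_gain_product_def tx_rx_gain_product_le tx_gain_nonneg rx_gain_nonneg)
qed

text \<open>Conditioning on the first column of \<open>G\<close> fixes the IRS phases; the remaining beams then have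
  unit-modulus weights and independent Gaussian entries.\<close>
lemma integral_aligned_gain_product_merge_ge:
  fixes N Mt Mr :: nat and x :: "nat \<times> nat \<times> nat \<Rightarrow> complex"
  assumes pos: "0 < Mt" "0 < Mr"
  defines "J0 \<equiv> tx_idx Mt Mr 0 ` {..<N}"
    and "J \<equiv> chan_index N Mt Mr - tx_idx Mt Mr 0 ` {..<N}"
    and "X \<equiv> (coherent_amplitude N (tx_idx Mt Mr 0) x)\<^sup>2"
  shows "(X + (real Mt - 1) * real N) * (X + (real Mr - 1) * real N)
    \<le> (\<integral>y. aligned_gain_product d lam N Mt Mr \<theta> (merge J0 J (x, y)) \<partial>iid_cgauss J)"
proof -
  have "integrable (iid_cgauss J) (\<lambda>y. (X + (\<Sum>k\<in>{1..<Mt}. beam_gain N (tx_idx Mt Mr k) (aligned_weight x) y))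
                                      * (X + (\<Sum>m\<in>{1..<Mr}. beam_gain N (rx_idx Mt Mr m) (aligned_weight x) y))) \<and>
    (X + real (card {1..<Mt}) * real N) * (X + real (card {1..<Mr}) * real N) \<le>
    (\<integral>y. (X + (\<Sum>k\<in>{1..<Mt}. beam_gain N (tx_idx Mt Mr k) (aligned_weight x) y))
            * (X + (\<Sum>m\<in>{1..<Mr}. beam_gain N (rx_idx Mt Mr m) (aligned_weight x) y)) \<partial>iid_cgauss J)"
    using finite_chan_index
    by (intro integral_sum_beam_gain_product_ge)
      (auto simp: J_def inj_on_tx_idx inj_on_rx_idx tx_idx_subset_diff_first rx_idx_subset_diff_first
        tx_rx_idx_same_or_disjoint norm_aligned_weight)
  then show ?thesis
    using pos by (simp add: aligned_gain_product_def X_def J0_def J_def aligned_gains_merge[OF pos refl] of_nat_diff)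
qed

lemma integral_aligned_gain_product_ge:
  assumes pos: "0 < Mt" "0 < Mr"
  shows "real N ^ 2 * (real Mt + (real N - 1) * cgauss_mean_norm\<^sup>2) * (real Mr + (real N - 1) * cgauss_mean_norm\<^sup>2)
    \<le> integral\<^sup>L (iid_cgauss (chan_index N Mt Mr)) (aligned_gain_product d lam N Mt Mr \<theta>)"
proof -
  define J0 where "J0 = tx_idx Mt Mr 0 ` {..<N}"
  define J where "J = chan_index N Mt Mr - tx_idx Mt Mr 0 ` {..<N}"
  define X where "X = (\<lambda>x. (coherent_amplitude N (tx_idx Mt Mr 0) x)\<^sup>2)"
  define p where "p = (real Mt - 1) * real N"
  define q where "q = (real Mr - 1) * real N"
  have J0_J: "J0 \<union> J = chan_index N Mt Mr" "J0 \<inter> J = {}"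
    using tx_idx_subset[OF pos(1)] by (auto simp: J0_def J_def)
  have fin: "finite J0" "finite J"
    using finite_chan_index by (auto simp: J0_def J_def)
  have X: "integrable (iid_cgauss J0) X" "integrable (iid_cgauss J0) (\<lambda>x. (X x)\<^sup>2)"
    "integral\<^sup>L (iid_cgauss J0) X = real N * (1 + (real N - 1) * cgauss_mean_norm\<^sup>2)"
    using integral_coherent_amplitude_sq[OF fin(1) inj_on_tx_idx] integrable_coherent_amplitude_sq_sq[OF fin(1)]
    by (auto simp: X_def J0_def)
  interpret J0: prob_space "iid_cgauss J0" by (rule prob_space_iid_cgauss)
  interpret product_sigma_finite "\<lambda>_::nat \<times> nat \<times> nat. cgauss" ..
  have "integrable (iid_cgauss (J0 \<union> J)) (aligned_gain_product d lam N Mt Mr \<theta>)"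
    unfolding J0_J(1) by (rule integrable_aligned_gain_product[OF pos])
  moreover have "(X x + p) * (X x + q)
      \<le> (\<integral>y. aligned_gain_product d lam N Mt Mr \<theta> (merge J0 J (x, y)) \<partial>iid_cgauss J)" for x
    unfolding X_def p_def q_def J0_def J_def by (rule integral_aligned_gain_product_merge_ge[OF pos])
  ultimately have "integral\<^sup>L (iid_cgauss J0) (\<lambda>x. (X x + p) * (X x + q))
      \<le> integral\<^sup>L (iid_cgauss (J0 \<union> J)) (aligned_gain_product d lam N Mt Mr \<theta>)"
    by (intro product_integral_fold_ge J0_J(2) fin J0.expectation_shifted_product_ge(1) X(1,2))
  moreover have "real N ^ 2 * (real Mt + (real N - 1) * cgauss_mean_norm\<^sup>2) * (real Mr + (real N - 1) * cgauss_mean_norm\<^sup>2)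
      = (integral\<^sup>L (iid_cgauss J0) X + p) * (integral\<^sup>L (iid_cgauss J0) X + q)"
    by (simp add: X(3) p_def q_def power2_eq_square algebra_simps)
  ultimately show ?thesis
    using J0.expectation_shifted_product_ge(2)[OF X(1,2), of p q] by (simp add: J0_J)
qed

section \<open>The condition on the number of IRS elements\<close>

lemma quarter_pi_square_le:
  fixes x m :: real
  assumes x: "0 \<le> x" and m: "2 / pi \<le> m"
  shows "(1 + pi * x / 4)\<^sup>2 \<le> (1 + x) * (1 + x * m)"
proof -
  have pi: "3 \<le> pi" "pi \<le> 63/20" using pi_approx by simp_all
  have c1: "0 \<le> 1 + 2 / pi - pi / 2"
  proof -
    have "pi * pi \<le> 63/20 * pi" using pi by (intro mult_right_mono) auto
    then have "pi * pi \<le> 4 + 2 * pi" using pi by linarith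
    then have "0 \<le> (4 + 2 * pi - pi * pi) / (2 * pi)" using pi by (intro divide_nonneg_pos) auto
    also have "\<dots> = 1 + 2 / pi - pi / 2" using pi by (simp add: field_simps)
    finally show ?thesis .
  qed
  have c2: "0 \<le> 2 / pi - pi\<^sup>2 / 16"
  proof -
    have "pi ^ 3 \<le> (63/20) ^ 3" using pi by (intro power_mono) auto
    also have "\<dots> \<le> 32" by (simp add: power3_eq_cube)
    finally have "0 \<le> (32 - pi ^ 3) / (16 * pi)" using pi by (intro divide_nonneg_pos) auto
    also have "\<dots> = 2 / pi - pi\<^sup>2 / 16" using pi by (simp add: field_simps power2_eq_square power3_eq_cube)
    finally show ?thesis .
  qed
  have "(1 + x) * (1 + x * (2 / pi)) - (1 + pi * x / 4)\<^sup>2 = x * (1 + 2 / pi - pi / 2) + x\<^sup>2 * (2 / pi - pi\<^sup>2 / 16)"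
    by (simp add: field_simps power2_eq_square)
  moreover have "(1 + x) * (1 + x * (2 / pi)) \<le> (1 + x) * (1 + x * m)"
    using x m by (intro mult_left_mono add_left_mono mult_left_mono) auto
  ultimately show ?thesis
    using x c1 c2 by (smt (verit) mult_nonneg_nonneg zero_le_power2)
qed

lemma shifted_products_le:
  fixes N M M' a b :: real
  assumes M: "1 \<le> M" "1 \<le> M'" and ab: "0 \<le> a" "0 \<le> b"
    and N: "1 + b \<le> N" "(1 + a)\<^sup>2 \<le> N * (1 + b)"
  shows "(1 + b) * ((M + a) * (M' + a)) \<le> N * ((M + b) * (M' + b))"
proof (cases "a \<le> b")
  case True
  have "(M + a) * (M' + a) \<le> (M + b) * (M' + b)"
    using True ab M by (intro mult_mono) auto
  with N(1) show ?thesis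
    by (rule mult_mono) (use ab M N(1) in auto)
next
  case False
  have cross: "(1 + b) * (K + a) \<le> (K + b) * (1 + a)" if "1 \<le> K" for K
  proof -
    have "(K + b) * (1 + a) - (1 + b) * (K + a) = (K - 1) * (a - b)"
      by (simp add: algebra_simps)
    also have "\<dots> \<ge> 0" using that False by simp
    finally show ?thesis by simp
  qed
  have "((1 + b) * (M + a)) * ((1 + b) * (M' + a)) \<le> ((M + b) * (1 + a)) * ((M' + b) * (1 + a))"
    by (rule mult_mono[OF cross[OF M(1)] cross[OF M(2)]]) (use ab M in auto)
  with N(2) have "(1 + a)\<^sup>2 * ((1 + b) * ((M + a) * (M' + a))) \<le> (1 + a)\<^sup>2 * (N * ((M + b) * (M' + b)))"
    using ab M by (smt (verit, best) mult.assoc mult.commute mult_nonneg_nonneg mult_right_mono power2_eq_square)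
  then show ?thesis
    using ab by (simp add: mult_le_cancel_left_pos)
qed

lemma snr_ratio_gt:
  fixes N Mt Mr L m :: real
  assumes N: "1 \<le> N" and Mt: "1 \<le> Mt" and Mr: "1 \<le> Mr" and L: "0 < L"
    and m: "2 / pi \<le> m" "m \<le> 1"
    and h: "Mt * Mr < L * (Mt + pi * (N - 1) / 4) * (Mr + pi * (N - 1) / 4)"
  shows "Mt * Mr * (1 + (N - 1) * m) < L * N * (Mt + (N - 1) * m) * (Mr + (N - 1) * m)"
proof -
  define a where "a = pi * (N - 1) / 4"
  define b where "b = (N - 1) * m"
  text \<open>For the true value \<open>m = pi / 4\<close> we would have \<open>b = a\<close>; since only \<open>2 / pi \<le> m \<le> 1\<close>
    is used, the case \<open>b < a\<close> needs \<open>(1 + a)\<^sup>2 \<le> N (1 + b)\<close>.\<close>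
  have "0 \<le> m" using m(1) by (smt (verit) divide_nonneg_pos pi_gt_zero)
  then have ab: "0 \<le> a" "0 \<le> b" using N by (simp_all add: a_def b_def)
  have "1 + b \<le> N" using N m(2) by (simp add: b_def) (smt (verit) mult_left_le)
  moreover have "(1 + a)\<^sup>2 \<le> N * (1 + b)"
    using quarter_pi_square_le[of "N - 1" m] N m by (simp add: a_def b_def mult.commute)
  ultimately have key: "(1 + b) * ((Mt + a) * (Mr + a)) \<le> N * ((Mt + b) * (Mr + b))"
    by (intro shifted_products_le Mt Mr ab)
  have "Mt * Mr * (1 + b) < L * ((1 + b) * ((Mt + a) * (Mr + a)))"
    using mult_strict_right_mono[OF h, of "1 + b"] ab by (simp add: a_def ac_simps)
  also have "\<dots> \<le> L * (N * ((Mt + b) * (Mr + b)))" using key L by simp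
  finally show ?thesis by (simp add: b_def algebra_simps)
qed

lemma N_threshold_imp_shifted_product_gt:
  fixes N Mt Mr L Kmin Kmax :: real
  assumes Mt: "0 \<le> Mt" and Mr: "0 \<le> Mr" and L: "0 < L" and K: "Kmin * Kmax = Mt * Mr"
    and h: "N > 2 / pi * sqrt ((Mt + Mr)\<^sup>2 + 4 * (Mt * Mr / L - Kmin * Kmax)) - 2 * (Mt + Mr) / pi + 1"
  shows "Mt * Mr < L * (Mt + pi * (N - 1) / 4) * (Mr + pi * (N - 1) / 4)"
proof -
  define D where "D = (Mt + Mr)\<^sup>2 + 4 * (Mt * Mr / L - Mt * Mr)"
  define a where "a = pi * (N - 1) / 4"
  define x where "x = 2 * a + (Mt + Mr)"
  have "D = (Mt - Mr)\<^sup>2 + 4 * (Mt * Mr / L)"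
    by (simp add: D_def power2_eq_square algebra_simps)
  then have D0: "0 \<le> D" using Mt Mr L by simp
  have "pi / 2 * (2 / pi * sqrt D) < pi / 2 * (N - 1 + 2 * (Mt + Mr) / pi)"
    using h K by (intro mult_strict_left_mono) (auto simp: D_def)
  moreover have "pi / 2 * (N - 1 + 2 * (Mt + Mr) / pi) = x"
    by (simp add: x_def a_def field_simps)
  ultimately have "sqrt D < x" by simp
  then have "(sqrt D)\<^sup>2 < x\<^sup>2"
    using D0 by (intro power_strict_mono) auto
  then have "D < x\<^sup>2"
    using D0 by simp
  moreover have "x\<^sup>2 - D = 4 * ((Mt + a) * (Mr + a) - Mt * Mr / L)"
    by (simp add: D_def x_def power2_eq_square algebra_simps)
  ultimately have "0 < 4 * ((Mt + a) * (Mr + a) - Mt * Mr / L)"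
    by linarith
  then have "Mt * Mr / L < (Mt + a) * (Mr + a)"
    by simp
  then show ?thesis using L by (simp add: a_def divide_less_eq mult.commute mult.left_commute)
qed

lemma avg_snr_semi_passive_le:
  fixes N Mt Mr :: nat
  assumes "0 \<le> P0" "0 \<le> \<sigma>2" "0 \<le> L"
  defines "b \<equiv> (real N - 1) * cgauss_mean_norm\<^sup>2"
  shows "avg_snr_semi_passive d lam N Mt Mr P0 \<sigma>2 \<alpha> L \<theta>
    \<le> P0 * (cmod \<alpha>)\<^sup>2 * L * real Mr * (real Mt * (real N * (1 + b))) / \<sigma>2"
proof -
  define k where "k = P0 * (cmod \<alpha>)\<^sup>2 * L * real Mr / \<sigma>2"
  have k: "0 \<le> k" using assms by (simp add: k_def)
  define H where "H = (\<lambda>z. SUP \<phi>. k * tx_gain d lam N Mt Mr \<theta> z \<phi>)"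
  define U where "U = (\<lambda>z. \<Sum>k<Mt. (coherent_amplitude N (tx_idx Mt Mr k) z)\<^sup>2)"
  have "integrable (chan_measure N Mt Mr) (\<lambda>z. (coherent_amplitude N (tx_idx Mt Mr k) z)\<^sup>2) \<and>
      integral\<^sup>L (chan_measure N Mt Mr) (\<lambda>z. (coherent_amplitude N (tx_idx Mt Mr k) z)\<^sup>2) = real N * (1 + b)"
    if "k < Mt" for k
    using integral_coherent_amplitude_sq[OF finite_chan_index inj_on_tx_idx tx_idx_subset[OF that]]
    by (simp add: chan_measure_def b_def)
  then have U: "integrable (chan_measure N Mt Mr) U" "integral\<^sup>L (chan_measure N Mt Mr) U = real Mt * (real N * (1 + b))"
    unfolding U_def by (auto intro: Bochner_Integration.integrable_sum simp: Bochner_Integration.integral_sum)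
  have H_le: "H z \<le> k * U z" for z
    unfolding H_def tx_gain_eq_sum_beam_gain U_def
    by (intro cSUP_least mult_left_mono[OF _ k] sum_mono beam_gain_le_coherent_amplitude norm_irs_weight) auto
  have "integral\<^sup>L (chan_measure N Mt Mr) H \<le> k * (real Mt * (real N * (1 + b)))"
  proof (cases "integrable (chan_measure N Mt Mr) H")
    case True
    then have "integral\<^sup>L (chan_measure N Mt Mr) H \<le> integral\<^sup>L (chan_measure N Mt Mr) (\<lambda>z. k * U z)"
      using U(1) H_le by (intro integral_mono) auto
    then show ?thesis by (simp add: U(2))
  next
    case False
    have "0 \<le> real N * (1 + b)"
      using cgauss_mean_norm_bounds by (cases N) (auto simp: b_def)
    then show ?thesis
      using k False by (simp add: not_integrable_integral_eq)
  qed
  moreover have "avg_snr_semi_passive d lam N Mt Mr P0 \<sigma>2 \<alpha> L \<theta> = integral\<^sup>L (chan_measure N Mt Mr) H"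
    by (simp only: avg_snr_semi_passive_def H_def k_def times_divide_eq_left)
  ultimately show ?thesis
    by (simp only: k_def times_divide_eq_left)
qed

lemma bdd_above_gain_product:
  assumes "0 \<le> k"
  shows "bdd_above (range (\<lambda>\<phi>. k * (tx_gain d lam N Mt Mr \<theta> z \<phi> * rx_gain d lam N Mt Mr \<theta> z \<phi>)))"
  using mult_left_mono[OF tx_rx_gain_product_le assms] by (intro bdd_aboveI2) auto

lemma integrable_SUP_gain_product:
  assumes k: "0 \<le> k"
  shows "integrable (iid_cgauss (chan_index N Mt Mr))
    (\<lambda>z. SUP \<phi>. k * (tx_gain d lam N Mt Mr \<theta> z \<phi> * rx_gain d lam N Mt Mr \<theta> z \<phi>))"
proof -
  define G where "G = (\<lambda>z \<phi>. k * (tx_gain d lam N Mt Mr \<theta> z \<phi> * rx_gain d lam N Mt Mr \<theta> z \<phi>))"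
  have bdd: "bdd_above (range (G z))" for z
    unfolding G_def by (rule bdd_above_gain_product[OF k])
  have "(\<lambda>z. G z \<phi>) \<in> borel_measurable (iid_cgauss (chan_index N Mt Mr))" for \<phi>
    unfolding G_def by measurable
  moreover have "continuous_on UNIV (G z)" for z
    unfolding G_def by (intro continuous_intros continuous_on_tx_gain continuous_on_rx_gain)
  ultimately have "(\<lambda>z. SUP \<phi>. G z \<phi>) \<in> borel_measurable (iid_cgauss (chan_index N Mt Mr))"
    by (intro borel_measurable_SUP_continuous bdd)
  moreover have "\<bar>SUP \<phi>. G z \<phi>\<bar> \<le> k * (real Mt * real Mr * real N ^ 4) * (sq_norm_on (chan_index N Mt Mr) z)\<^sup>2" for z
  proof -
    have "0 \<le> G z (\<lambda>_. 0)" using k by (simp add: G_def tx_gain_nonneg rx_gain_nonneg)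
    then have "0 \<le> (SUP \<phi>. G z \<phi>)" using cSUP_upper[OF UNIV_I bdd] by (rule order_trans)
    moreover have "(SUP \<phi>. G z \<phi>) \<le> k * (real Mt * real Mr * real N ^ 4 * (sq_norm_on (chan_index N Mt Mr) z)\<^sup>2)"
      unfolding G_def by (intro cSUP_least mult_left_mono[OF tx_rx_gain_product_le k]) auto
    ultimately show ?thesis by (simp add: mult.assoc)
  qed
  ultimately show ?thesis
    unfolding G_def by (rule integrable_iid_cgauss_sq_norm_bound[OF finite_chan_index])
qed

lemma avg_snr_fully_passive_ge:
  fixes N Mt Mr :: nat
  assumes pos: "0 < Mt" "0 < Mr" and "0 \<le> P0" "0 \<le> \<sigma>2"
  defines "b \<equiv> (real N - 1) * cgauss_mean_norm\<^sup>2"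
  shows "P0 * (cmod \<alpha>)\<^sup>2 * L\<^sup>2 * (real N ^ 2 * (real Mt + b) * (real Mr + b)) / \<sigma>2
    \<le> avg_snr_fully_passive d lam N Mt Mr P0 \<sigma>2 \<alpha> L \<theta>"
proof -
  define k where "k = P0 * (cmod \<alpha>)\<^sup>2 * L\<^sup>2 / \<sigma>2"
  have k: "0 \<le> k" using assms by (simp add: k_def)
  let ?M = "iid_cgauss (chan_index N Mt Mr)"
  have "k * (real N ^ 2 * (real Mt + b) * (real Mr + b)) \<le> k * integral\<^sup>L ?M (aligned_gain_product d lam N Mt Mr \<theta>)"
    using integral_aligned_gain_product_ge[OF pos] k unfolding b_def by (rule mult_left_mono)
  also have "\<dots> = integral\<^sup>L ?M (\<lambda>z. k * aligned_gain_product d lam N Mt Mr \<theta> z)"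
    by simp
  also have "\<dots> \<le> integral\<^sup>L ?M (\<lambda>z. SUP \<phi>. k * (tx_gain d lam N Mt Mr \<theta> z \<phi> * rx_gain d lam N Mt Mr \<theta> z \<phi>))"
  proof (rule integral_mono[OF _ integrable_SUP_gain_product[OF k]])
    show "integrable ?M (\<lambda>z. k * aligned_gain_product d lam N Mt Mr \<theta> z)"
      using integrable_aligned_gain_product[OF pos] by (rule integrable_mult_right)
    show "k * aligned_gain_product d lam N Mt Mr \<theta> z
        \<le> (SUP \<phi>. k * (tx_gain d lam N Mt Mr \<theta> z \<phi> * rx_gain d lam N Mt Mr \<theta> z \<phi>))" for z
      unfolding aligned_gain_product_def by (rule cSUP_upper[OF UNIV_I bdd_above_gain_product[OF k]])
  qed
  also have "\<dots> = avg_snr_fully_passive d lam N Mt Mr P0 \<sigma>2 \<alpha> L \<theta>"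
    by (simp only: avg_snr_fully_passive_def chan_measure_def k_def times_divide_eq_left mult.assoc)
  finally show ?thesis
    by (simp only: k_def times_divide_eq_left)
qed

theorem theorem2:
  fixes d lam P0 \<sigma>2 L \<theta> :: real and \<alpha> :: complex and N Mt Mr :: nat
  assumes "d > 0" and "lam > 0"
    and "N > 0" and "even N" and "Mt > 0" and "Mr > 0"
    and "P0 > 0" and "\<sigma>2 > 0" and "\<alpha> \<noteq> 0" and "L > 0"
    and "real N > 2 / pi * sqrt ((real Mt + real Mr)\<^sup>2
            + 4 * (real Mt * real Mr / L - real (min Mt Mr) * real (max Mt Mr)))
          - 2 * (real Mt + real Mr) / pi + 1"
  shows "avg_snr_fully_passive d lam N Mt Mr P0 \<sigma>2 \<alpha> L \<theta>
         > avg_snr_semi_passive d lam N Mt Mr P0 \<sigma>2 \<alpha> L \<theta>"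
proof -
  define b where "b = (real N - 1) * cgauss_mean_norm\<^sup>2"
  have "real (min Mt Mr) * real (max Mt Mr) = real Mt * real Mr"
    by (cases "Mt \<le> Mr") (auto simp: min_def max_def)
  then have "real Mt * real Mr < L * (real Mt + pi * (real N - 1) / 4) * (real Mr + pi * (real N - 1) / 4)"
    using assms(10,11) by (intro N_threshold_imp_shifted_product_gt) auto
  then have "real Mt * real Mr * (1 + b) < L * real N * (real Mt + b) * (real Mr + b)"
    unfolding b_def using assms(3,5,6,10) cgauss_mean_norm_bounds by (intro snr_ratio_gt) auto
  then have "P0 * (cmod \<alpha>)\<^sup>2 * L * real N / \<sigma>2 * (real Mt * real Mr * (1 + b))
      < P0 * (cmod \<alpha>)\<^sup>2 * L * real N / \<sigma>2 * (L * real N * (real Mt + b) * (real Mr + b))"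
    using assms by (intro mult_strict_left_mono) auto
  then have "P0 * (cmod \<alpha>)\<^sup>2 * L * real Mr * (real Mt * (real N * (1 + b))) / \<sigma>2
      < P0 * (cmod \<alpha>)\<^sup>2 * L\<^sup>2 * (real N ^ 2 * (real Mt + b) * (real Mr + b)) / \<sigma>2"
    by (simp add: power2_eq_square mult_ac)
  moreover have "avg_snr_semi_passive d lam N Mt Mr P0 \<sigma>2 \<alpha> L \<theta>
      \<le> P0 * (cmod \<alpha>)\<^sup>2 * L * real Mr * (real Mt * (real N * (1 + b))) / \<sigma>2"
    unfolding b_def by (rule avg_snr_semi_passive_le) (use assms in auto)
  moreover have "P0 * (cmod \<alpha>)\<^sup>2 * L\<^sup>2 * (real N ^ 2 * (real Mt + b) * (real Mr + b)) / \<sigma>2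
      \<le> avg_snr_fully_passive d lam N Mt Mr P0 \<sigma>2 \<alpha> L \<theta>"
    unfolding b_def by (rule avg_snr_fully_passive_ge) (use assms in auto)
  ultimately show ?thesis
    by linarith
qed

end
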